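(* Fix an equation $(f,q,w)$ as in the context. Let $K=(k_{ij})\in SL(2,\mathbb R)$, $\gamma\in(-\pi,\pi]$, and write $\lambda_n(e^{i\gamma}K)$ for the eigenvalues with the boundary condition $[e^{i\gamma}K\,|\,-I]$. Let $\mathbf T_K=\begin{pmatrix}0&1&0&0\\0&0&-k_{21}&k_{11}\end{pmatrix}$ and $\mathbf U_K=\begin{pmatrix}k_{11}&k_{12}&0&0\\0&0&1&0\end{pmatrix}$. Then the problem with $[e^{i\gamma}K|-I]$ has exactly $N$ eigenvalues if $k_{11}-f_0k_{12}\ne0$ and $N-1$ if $k_{11}-f_0k_{12}=0$; with $\mathbf T_K$ exactly $N$ if $k_{11}\neq0$ and $N-1$ if $k_{11}=0$; with $\mathbf U_K$ exactly $N-1$ if $k_{11}-f_0k_{12}\neq0$ and $N-2$ if $k_{11}-f_0k_{12}=0$. Furthermore: (i) if $(k_{11}-f_0k_{12})k_{11}f_0>0$: $\lambda_n(\mathbf T_K)\le\lambda_n(e^{i\gamma}K)$ for $0\le n\le N-1$ and $\lambda_n(e^{i\gamma}K)\le\lambda_{n+1}(\mathbf T_K)$ for $0\le n\le N-2$; if $(k_{11}-f_0k_{12})k_{11}f_0<0$: $\lambda_n(e^{i\gamma}K)\le\lambda_n(\mathbf T_K)$ for $0\le n\le N-1$ and $\lambda_n(\mathbf T_K)\le\lambda_{n+1}(e^{i\gamma}K)$ for $0\le n\le N-2$; if $k_{11}-f_0k_{12}=0$: $\lambda_n(\mathbf T_K)\le\lambda_n(e^{i\gamma}K)\le\lambda_{n+1}(\mathbf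 T_K)$ for $0\le n\le N-2$; if $k_{11}=0$: $\lambda_n(e^{i\gamma}K)\le\lambda_n(\mathbf T_K)\le\lambda_{n+1}(e^{i\gamma}K)$ for $0\le n\le N-2$; (ii) if $k_{11}-f_0k_{12}\neq0$: $\lambda_n(e^{i\gamma}K)\le\lambda_n(\mathbf U_K)\le\lambda_{n+1}(e^{i\gamma}K)$ for $0\le n\le N-2$; if $k_{11}-f_0k_{12}=0$: $\lambda_n(e^{i\gamma}K)\le\lambda_n(\mathbf U_K)\le\lambda_{n+1}(e^{i\gamma}K)$ for $0\le n\le N-3$.
   Context: Let $N\ge2$ be an integer. An equation is given by real sequences $f=\{f_n\}_{n=0}^N$, $q=\{q_n\}_{n=1}^N$, $w=\{w_n\}_{n=1}^N$ with $f_n\neq0$, $w_n>0$; it is $-\nabla(f_n\Delta y_n)+q_ny_n=\lambda w_ny_n$, $1\le n\le N$, for $y=\{y_n\}_{n=0}^{N+1}$, $\Delta y_n=y_{n+1}-y_n$, $\nabla y_n=y_n-y_{n-1}$. A boundary condition $[A\,|\,B]$ (equivalently the $2\times4$ coefficient matrix $(A,B)$ of rank 2) is $A(y_0,f_0\Delta y_0)^T+B(y_N,f_N\Delta y_N)^T=0$; matrices differing by left multiplication by an invertible $2\times2$ complex matrix give the same condition. $SL(2,\mathbb R)$ is the set of real $2\times2$ matrices of determinant 1; $I$ is the identity. Eigenvalues ($\lambda$ with a nontrivial solution) of these self-adjoint problems are real; multiplicity = dimension of the solution space (equal to the multiplicity as a zero of the characteristic polynomial); counted with multiplicity they are ordered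 $\lambda_0\le\lambda_1\le\cdots$, and "exactly $k$ eigenvalues" counts multiplicity. *)

theory Defs
  imports "HOL-Analysis.Analysis" "HOL-Library.Function_Algebras" "HOL-Library.Multiset"
begin

text \<open>Sequences y = (y_0,...,y_{N+1}) are modelled as functions nat => complex vanishing
  beyond index N+1; the coefficients f, q, w are real sequences (only the indices
  0..N resp. 1..N matter).  A boundary condition is a 2x4 complex coefficient matrix,
  given as a function of row index i<2 and column index j<4.\<close>

definition fwd :: "(nat \<Rightarrow> complex) \<Rightarrow> nat \<Rightarrow> complex" where
  "fwd y n = y (Suc n) - y n"

definition bvec :: "(nat \<Rightarrow> real) \<Rightarrow> nat \<Rightarrow> (nat \<Rightarrow> complex) \<Rightarrow> nat \<Rightarrow> complex" where
  "bvec f N y j = (if j = 0 then y 0 else if j = 1 then of_real (f 0) * fwd y 0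
                   else if j = 2 then y N else of_real (f N) * fwd y N)"

definition sol_space ::
  "nat \<Rightarrow> (nat \<Rightarrow> real) \<Rightarrow> (nat \<Rightarrow> real) \<Rightarrow> (nat \<Rightarrow> real) \<Rightarrow> (nat \<Rightarrow> nat \<Rightarrow> complex)
   \<Rightarrow> complex \<Rightarrow> (nat \<Rightarrow> complex) set" where
  "sol_space N f q w BC lam = {y. (\<forall>n>Suc N. y n = 0)
     \<and> (\<forall>n\<in>{1..N}. - (of_real (f n) * fwd y n - of_real (f (n-1)) * fwd y (n-1))
                     + of_real (q n) * y n = lam * of_real (w n) * y n)
     \<and> (\<forall>i<2. (\<Sum>j<4. BC i j * bvec f N y j) = 0)}"

definition is_eig where
  "is_eig N f q w BC lam \<longleftrightarrow> (\<exists>y\<in>sol_space N f q w BC lam. y \<noteq> 0)"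

definition eig_mult where
  "eig_mult N f q w BC lam =
     vector_space.dim (\<lambda>(c::complex) (y::nat \<Rightarrow> complex). (\<lambda>n. c * y n)) (sol_space N f q w BC lam)"

definition eig_set where
  "eig_set N f q w BC = {lam. is_eig N f q w BC lam}"

definition num_eigs_eq where
  "num_eigs_eq N f q w BC k \<longleftrightarrow> finite (eig_set N f q w BC) \<and>
     (\<Sum>lam\<in>eig_set N f q w BC. eig_mult N f q w BC lam) = k"

text \<open>Real eigenvalues listed in nondecreasing order, repeated according to multiplicity;
  lambda_n is the n-th entry (0-based).\<close>
definition eig_list where
  "eig_list N f q w BC = sorted_list_of_multiset
     (\<Sum>x\<in>{x::real. is_eig N f q w BC (of_real x)}.
        replicate_mset (eig_mult N f q w BC (of_real x)) x)"

definition eigv where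
  "eigv N f q w BC n = eig_list N f q w BC ! n"

definition BC_K :: "real \<Rightarrow> real \<Rightarrow> real \<Rightarrow> real \<Rightarrow> real \<Rightarrow> nat \<Rightarrow> nat \<Rightarrow> complex" where
  "BC_K \<gamma> k11 k12 k21 k22 i j =
     (if i = 0 then [cis \<gamma> * of_real k11, cis \<gamma> * of_real k12, -1, 0] ! j
      else [cis \<gamma> * of_real k21, cis \<gamma> * of_real k22, 0, -1] ! j)"

definition BC_T :: "real \<Rightarrow> real \<Rightarrow> real \<Rightarrow> real \<Rightarrow> nat \<Rightarrow> nat \<Rightarrow> complex" where
  "BC_T k11 k12 k21 k22 i j =
     (if i = 0 then [0, 1, 0, 0] ! j else [0, 0, - of_real k21, of_real k11] ! j)"

definition BC_U :: "real \<Rightarrow> real \<Rightarrow> real \<Rightarrow> real \<Rightarrow> nat \<Rightarrow> nat \<Rightarrow> complex" where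
  "BC_U k11 k12 k21 k22 i j =
     (if i = 0 then [of_real k11, of_real k12, 0, 0] ! j else [0, 0, 1, 0] ! j)"

end

theory Submission
  imports Defs "HOL-Computational_Algebra.Fundamental_Theorem_Algebra"
begin

text \<open>
  For each of the three boundary conditions the eigenvalues are the zeros, counted with order, of
  a real polynomial built from the transfer matrix \<open>M(\<lambda>)\<close> of the equation: for
  \<open>[e^{i\<gamma>}K | -I]\<close> it is \<open>tr (K\<^sup>-\<^sup>1 M) - 2 cos \<gamma>\<close>, for \<open>T\<^sub>K\<close> and \<open>U\<^sub>K\<close> an off-diagonal entry
  of \<open>K\<^sup>-\<^sup>1 M\<close> or of \<open>(K M\<^sup>-\<^sup>1)\<^sup>T\<close>. Lagrange's identity makes all zeros real, and the
  degrees of these polynomials give the eigenvalue counts.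

  The discrete Wronskian identity says that \<open>M(\<lambda>)\<close> rotates every real vector monotonically in
  \<open>\<lambda>\<close>. Consequently, for such a polynomial pair \<open>(D, r)\<close>, the number of zeros of \<open>r\<close> up to \<open>t\<close>
  minus that of \<open>D\<close>, plus one if \<open>D(t)\<close> and \<open>r(t)\<close> have the same sign, never jumps. So the two
  counting functions differ by \<open>0\<close> or \<open>1\<close> everywhere, in the direction read off from the
  degrees and leading coefficients, and this is exactly the interlacing of the ordered
  eigenvalues.
\<close>


definition cpoly :: "real poly \<Rightarrow> complex poly" where
  "cpoly p = map_poly of_real p"

lemma coeff_cpoly [simp]: "coeff (cpoly p) n = of_real (coeff p n)"
  by (simp add: cpoly_def coeff_map_poly)

lemma cpoly_0 [simp]: "cpoly 0 = 0"
  and cpoly_1 [simp]: "cpoly 1 = 1"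
  and cpoly_pCons [simp]: "cpoly (pCons a p) = pCons (of_real a) (cpoly p)"
  and cpoly_add [simp]: "cpoly (p + q) = cpoly p + cpoly q"
  and cpoly_diff [simp]: "cpoly (p - q) = cpoly p - cpoly q"
  and cpoly_uminus [simp]: "cpoly (- p) = - cpoly p"
  and cpoly_smult [simp]: "cpoly (smult c p) = smult (of_real c) (cpoly p)"
  and cpoly_mult [simp]: "cpoly (p * q) = cpoly p * cpoly q"
  and cpoly_pderiv [simp]: "cpoly (pderiv p) = pderiv (cpoly p)"
  by (rule poly_eqI; simp add: coeff_pCons coeff_mult coeff_pderiv split: nat.splits)+

lemma cpoly_eq_0_iff [simp]: "cpoly p = 0 \<longleftrightarrow> p = 0"
  by (simp add: cpoly_def map_poly_eq_0_iff)

lemma degree_cpoly [simp]: "degree (cpoly p) = degree p"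
  by (simp add: cpoly_def degree_map_poly)

lemma poly_cpoly_of_real [simp]: "poly (cpoly p) (of_real x) = of_real (poly p x)"
  by (induct p) (auto simp: algebra_simps)

lemma cnj_poly_cpoly: "cnj (poly (cpoly p) z) = poly (cpoly p) (cnj z)"
  by (induct p) (auto simp: algebra_simps)

lemma order_cpoly_of_real: "order (of_real x) (cpoly p) = order x p"
proof (induct "degree p" arbitrary: p rule: less_induct)
  case less
  show ?case
  proof (cases "p \<noteq> 0 \<and> poly p x = 0")
    case True
    have "degree p \<noteq> 0"
    proof
      assume "degree p = 0"
      then obtain c where "p = [:c:]"
        by (rule degree_eq_zeroE)
      with True show False
        by simp
    qed
    then have "order x (pderiv p) = order (of_real x) (cpoly (pderiv p))"
      using less[of "pderiv p"] by (simp add: degree_pderiv)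
    moreover have "order x p = Suc (order x (pderiv p))"
      using True by (intro order_pderiv) auto
    moreover have "order (of_real x) (cpoly p) = Suc (order (of_real x) (pderiv (cpoly p)))"
      using True by (intro order_pderiv) auto
    ultimately show ?thesis
      by simp
  next
    case False
    then consider "p = 0" | "poly p x \<noteq> 0"
      by blast
    then show ?thesis
      by cases (simp add: order_def, simp add: order_0I)
  qed
qed

lemma degree_eqI: "degree p \<le> d \<Longrightarrow> coeff p d \<noteq> 0 \<Longrightarrow> degree p = d"
  by (meson antisym le_degree)

lemma sum_order_real_roots:
  assumes "p \<noteq> 0" and real_roots: "\<And>z. poly (cpoly p) z = 0 \<Longrightarrow> z \<in> \<real>"
  shows "(\<Sum>x | poly p x = 0. order x p) = degree p"
proof -
  have roots: "{z. poly (cpoly p) z = 0} = of_real ` {x. poly p x = 0}"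
  proof safe
    fix z assume "poly (cpoly p) z = 0"
    moreover from this obtain x where "z = of_real x"
      using real_roots Reals_cases by blast
    ultimately show "z \<in> of_real ` {x. poly p x = 0}"
      by auto
  qed auto
  have "degree p = size (proots (cpoly p))"
    by (simp add: size_proots_complex)
  also have "\<dots> = (\<Sum>z | poly (cpoly p) z = 0. order z (cpoly p))"
    using \<open>p \<noteq> 0\<close> by (simp add: size_multiset_overloaded_eq)
  also have "\<dots> = (\<Sum>x | poly p x = 0. order x p)"
    unfolding roots by (subst sum.reindex) (auto simp: inj_on_def order_cpoly_of_real)
  finally show ?thesis ..
qed

section \<open>Sign changes of real polynomials\<close>

lemma poly_sgn_eq_if_no_root:
  fixes P :: "real poly"
  assumes "a \<le> b" "\<And>u. a \<le> u \<Longrightarrow> u \<le> b \<Longrightarrow> poly P u \<noteq> 0"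
  shows "sgn (poly P a) = sgn (poly P b)"
proof (rule ccontr)
  assume ne: "sgn (poly P a) \<noteq> sgn (poly P b)"
  have "poly P a \<noteq> 0" "poly P b \<noteq> 0"
    using assms by auto
  with ne have "poly P a * poly P b < 0"
    by (auto simp: sgn_if mult_less_0_iff split: if_splits)
  moreover have "a < b"
    using ne assms(1) by (cases "a = b") auto
  ultimately obtain x where "a < x" "x < b" "poly P x = 0"
    using poly_IVT by blast
  with assms(2) show False
    by auto
qed

lemma poly_pos_right_of_root:
  fixes P :: "real poly"
  assumes "poly P c = 0" "poly (pderiv P) c > 0" "c < y"
    and "\<And>u. c < u \<Longrightarrow> u \<le> y \<Longrightarrow> poly P u \<noteq> 0"
  shows "poly P y > 0"
proof -
  obtain d where d: "d > 0" "\<And>h. 0 < h \<Longrightarrow> h < d \<Longrightarrow> poly P c < poly P (c + h)"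
    using DERIV_pos_inc_right[OF poly_DERIV assms(2)] by blast
  define h where "h = min (d / 2) (y - c)"
  have h: "h > 0" "h < d" "c + h \<le> y"
    using d assms(3) by (auto simp: h_def)
  have "sgn (poly P (c + h)) = sgn (poly P y)"
    by (rule poly_sgn_eq_if_no_root) (use h assms(4) in auto)
  then show ?thesis
    using d h assms(1) by (force simp: sgn_if split: if_splits)
qed

lemma poly_neg_left_of_root:
  fixes P :: "real poly"
  assumes "poly P c = 0" "poly (pderiv P) c > 0" "x < c"
    and "\<And>u. x \<le> u \<Longrightarrow> u < c \<Longrightarrow> poly P u \<noteq> 0"
  shows "poly P x < 0"
proof -
  obtain d where d: "d > 0" "\<And>h. 0 < h \<Longrightarrow> h < d \<Longrightarrow> poly P (c - h) < poly P c"
    using DERIV_pos_inc_left[OF poly_DERIV assms(2)] by blast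
  define h where "h = min (d / 2) (c - x)"
  have h: "h > 0" "h < d" "x \<le> c - h"
    using d assms(3) by (auto simp: h_def)
  have "sgn (poly P x) = sgn (poly P (c - h))"
    by (rule poly_sgn_eq_if_no_root) (use h assms(4) in auto)
  then show ?thesis
    using d h assms(1) by (force simp: sgn_if split: if_splits)
qed

text \<open>At a double root with negative second derivative the first derivative changes sign from
  positive to negative, so by the mean value theorem the polynomial is negative on both sides.\<close>

lemma poly_neg_right_of_double_root:
  fixes P :: "real poly"
  assumes "poly P c = 0" "poly (pderiv P) c = 0" "poly (pderiv (pderiv P)) c < 0" "c < y"
    and "\<And>u. c < u \<Longrightarrow> u \<le> y \<Longrightarrow> poly P u \<noteq> 0"
  shows "poly P y < 0"
proof -
  obtain d where d: "d > 0" "\<And>h. 0 < h \<Longrightarrow> h < d \<Longrightarrow> poly (pderiv P) (c + h) < poly (pderiv P) c"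
    using DERIV_neg_dec_right[OF poly_DERIV assms(3)] by blast
  define h where "h = min (d / 2) (y - c)"
  have h: "h > 0" "h < d" "c + h \<le> y"
    using d assms(4) by (auto simp: h_def)
  obtain z where z: "c < z" "z < c + h" "poly P (c + h) - poly P c = h * poly (pderiv P) z"
    using poly_MVT[of c "c + h" P] h by auto
  have "poly (pderiv P) z < 0"
    using d(2)[of "z - c"] z h assms(2) by auto
  then have "poly P (c + h) < 0"
    using z assms(1) h by (simp add: mult_pos_neg)
  moreover have "sgn (poly P (c + h)) = sgn (poly P y)"
    by (rule poly_sgn_eq_if_no_root) (use h assms(5) in auto)
  ultimately show ?thesis
    by (simp add: sgn_if split: if_splits)
qed

lemma poly_neg_left_of_double_root:
  fixes P :: "real poly"
  assumes "poly P c = 0" "poly (pderiv P) c = 0" "poly (pderiv (pderiv P)) c < 0" "x < c"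
    and "\<And>u. x \<le> u \<Longrightarrow> u < c \<Longrightarrow> poly P u \<noteq> 0"
  shows "poly P x < 0"
proof -
  obtain d where d: "d > 0" "\<And>h. 0 < h \<Longrightarrow> h < d \<Longrightarrow> poly (pderiv P) c < poly (pderiv P) (c - h)"
    using DERIV_neg_dec_left[OF poly_DERIV assms(3)] by blast
  define h where "h = min (d / 2) (c - x)"
  have h: "h > 0" "h < d" "x \<le> c - h"
    using d assms(4) by (auto simp: h_def)
  obtain z where z: "c - h < z" "z < c" "poly P c - poly P (c - h) = h * poly (pderiv P) z"
    using poly_MVT[of "c - h" c P] h by auto
  have "poly (pderiv P) z > 0"
    using d(2)[of "c - z"] z h assms(2) by auto
  then have "h * poly (pderiv P) z > 0"
    using h by simp
  then have "poly P (c - h) < 0"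
    using z assms(1) by simp
  moreover have "sgn (poly P x) = sgn (poly P (c - h))"
    by (rule poly_sgn_eq_if_no_root) (use h assms(5) in auto)
  ultimately show ?thesis
    by (simp add: sgn_if split: if_splits)
qed

lemma sgn_poly_near_simple_root:
  fixes P :: "real poly"
  assumes "poly P c = 0" "poly (pderiv P) c \<noteq> 0" "x < c" "c < y"
    and "\<And>u. x \<le> u \<Longrightarrow> u \<le> y \<Longrightarrow> u \<noteq> c \<Longrightarrow> poly P u \<noteq> 0"
  shows "sgn (poly P y) = sgn (poly (pderiv P) c)" "sgn (poly P x) = - sgn (poly (pderiv P) c)"
proof -
  have "poly Q y > 0 \<and> poly Q x < 0" if "Q = P \<or> Q = - P" "poly (pderiv Q) c > 0" for Q
    using poly_pos_right_of_root[of Q c y] poly_neg_left_of_root[of Q c x] that assms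
    by (auto simp: pderiv_minus)
  from this[of P] this[of "- P"] assms(2)
  show "sgn (poly P y) = sgn (poly (pderiv P) c)" "sgn (poly P x) = - sgn (poly (pderiv P) c)"
    by (cases "poly (pderiv P) c > 0"; force simp: pderiv_minus)+
qed

lemma sgn_poly_near_double_root:
  fixes P :: "real poly"
  assumes "poly P c = 0" "poly (pderiv P) c = 0" "poly (pderiv (pderiv P)) c \<noteq> 0" "x < c" "c < y"
    and "\<And>u. x \<le> u \<Longrightarrow> u \<le> y \<Longrightarrow> u \<noteq> c \<Longrightarrow> poly P u \<noteq> 0"
  shows "sgn (poly P y) = sgn (poly (pderiv (pderiv P)) c)"
    "sgn (poly P x) = sgn (poly (pderiv (pderiv P)) c)"
proof -
  have "poly Q y < 0 \<and> poly Q x < 0" if "Q = P \<or> Q = - P" "poly (pderiv (pderiv Q)) c < 0" for Q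
    using poly_neg_right_of_double_root[of Q c y] poly_neg_left_of_double_root[of Q c x] that assms
    by (auto simp: pderiv_minus)
  from this[of P] this[of "- P"] assms(3)
  show "sgn (poly P y) = sgn (poly (pderiv (pderiv P)) c)"
    "sgn (poly P x) = sgn (poly (pderiv (pderiv P)) c)"
    by (cases "poly (pderiv (pderiv P)) c < 0"; force simp: pderiv_minus)+
qed

lemma sgn_poly_at_top:
  fixes P :: "real poly"
  assumes "P \<noteq> 0" "\<And>u. y \<le> u \<Longrightarrow> poly P u \<noteq> 0"
  shows "sgn (poly P y) = sgn (lead_coeff P)"
proof -
  have "sgn (poly Q y) = 1" if Q: "Q = P \<or> Q = - P" "lead_coeff Q > 0" for Q
  proof -
    obtain n where n: "\<And>x. n \<le> x \<Longrightarrow> lead_coeff Q \<le> poly Q x"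
      using poly_pinfty_gt_lc[OF Q(2)] by blast
    have "sgn (poly Q y) = sgn (poly Q (max n y))"
      by (rule poly_sgn_eq_if_no_root) (use Q assms(2) in auto)
    then show ?thesis
      using n[of "max n y"] Q(2) by simp
  qed
  from this[of P] this[of "- P"] assms(1) show ?thesis
    by (cases "lead_coeff P > 0") (auto simp: less_le)
qed

lemma order_eq_1_if_simple_root:
  fixes P :: "real poly"
  assumes "poly P c = 0" "poly (pderiv P) c \<noteq> 0"
  shows "order c P = 1"
  using assms order_pderiv[of P c] order_0I[of "pderiv P" c] by fastforce

lemma order_eq_2_if_double_root:
  fixes P :: "real poly"
  assumes "poly P c = 0" "poly (pderiv P) c = 0" "poly (pderiv (pderiv P)) c \<noteq> 0"
  shows "order c P = 2"
  using assms order_pderiv[of P c] order_eq_1_if_simple_root[of "pderiv P" c] by fastforce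

definition root_count :: "real poly \<Rightarrow> real \<Rightarrow> nat" where
  "root_count P t = (\<Sum>x | poly P x = 0 \<and> x \<le> t. order x P)"

lemma root_count_eq_if_no_root:
  assumes "x \<le> y" "\<And>u. x < u \<Longrightarrow> u \<le> y \<Longrightarrow> poly P u \<noteq> 0"
  shows "root_count P y = root_count P x"
proof -
  have "{u. poly P u = 0 \<and> u \<le> y} = {u. poly P u = 0 \<and> u \<le> x}"
    using assms by (force simp: not_le)
  then show ?thesis
    by (simp add: root_count_def)
qed

lemma root_count_across_root:
  assumes "P \<noteq> 0" "x < c" "c < y" "\<And>u. x < u \<Longrightarrow> u \<le> y \<Longrightarrow> u \<noteq> c \<Longrightarrow> poly P u \<noteq> 0"
  shows "root_count P y = root_count P x + order c P"
proof -
  have fin: "finite {u. poly P u = 0 \<and> u \<le> x}"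
    using poly_roots_finite[OF assms(1)] by (rule finite_subset[rotated]) auto
  have "u \<le> x" if "poly P u = 0" "u \<le> y" "u \<noteq> c" for u
    using assms(4) that by (meson not_le)
  then have "{u. poly P u = 0 \<and> u \<le> y} =
      {u. poly P u = 0 \<and> u \<le> x} \<union> (if poly P c = 0 then {c} else {})"
    using assms(2,3) by auto
  then show ?thesis
    using fin assms(2) by (simp add: root_count_def sum.union_disjoint order_0I)
qed

lemma root_count_below_roots:
  assumes "\<And>u. poly P u = 0 \<Longrightarrow> t < u"
  shows "root_count P t = 0"
  using assms by (force simp: root_count_def intro: sum.neutral)

lemma root_count_above_roots:
  assumes "P \<noteq> 0" "\<And>u. poly P u = 0 \<Longrightarrow> u \<le> t" "\<And>z. poly (cpoly P) z = 0 \<Longrightarrow> z \<in> \<real>"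
  shows "root_count P t = degree P"
proof -
  have "{x. poly P x = 0 \<and> x \<le> t} = {x. poly P x = 0}"
    using assms by auto
  then show ?thesis
    using sum_order_real_roots[OF assms(1,3)] by (simp add: root_count_def)
qed

lemma eq_off_finite_set:
  fixes g :: "real \<Rightarrow> 'a" and Z :: "real set"
  assumes Z: "finite Z"
    and across: "\<And>x c y. x < c \<Longrightarrow> c < y \<Longrightarrow> c \<in> Z \<Longrightarrow>
       (\<And>u. x \<le> u \<Longrightarrow> u \<le> y \<Longrightarrow> u \<noteq> c \<Longrightarrow> u \<notin> Z) \<Longrightarrow> g x = g y"
    and between: "\<And>x y. x \<le> y \<Longrightarrow> (\<And>u. x \<le> u \<Longrightarrow> u \<le> y \<Longrightarrow> u \<notin> Z) \<Longrightarrow> g x = g y"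
  shows "x \<notin> Z \<Longrightarrow> y \<notin> Z \<Longrightarrow> g x = g y"
proof -
  have "g x = g y" if "x < y" "x \<notin> Z" "y \<notin> Z" "card (Z \<inter> {x<..<y}) = n" for n x y
    using that
  proof (induct n arbitrary: y rule: less_induct)
    case (less n y)
    have fin: "finite (Z \<inter> A)" for A
      using Z by auto
    show ?case
    proof (cases "Z \<inter> {x<..<y} = {}")
      case True
      then show ?thesis
        using less.prems by (intro between) (auto simp: less_le)
    next
      case False
      define c where "c = Max (Z \<inter> {x<..<y})"
      have c: "c \<in> Z" "x < c" "c < y"
        using Max_in[OF fin False] by (auto simp: c_def)
      have c_max: "u \<le> c" if "u \<in> Z" "x < u" "u < y" for u
        using Max_ge[OF fin, of u] that by (auto simp: c_def)
      define c' where "c' = Max (insert x (Z \<inter> {x<..<c}))"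
      have c': "x \<le> c'" "c' < c"
        using Max_in[of "insert x (Z \<inter> {x<..<c})"] fin c by (auto simp: c'_def)
      have c'_max: "u \<le> c'" if "u \<in> Z" "x < u" "u < c" for u
        using Max_ge[of "insert x (Z \<inter> {x<..<c})" u] fin that by (auto simp: c'_def)
      define z where "z = (c' + c) / 2"
      have z: "c' < z" "z < c" "x < z"
        using c' by (auto simp: z_def)
      have gap: "u \<notin> Z" if u: "z \<le> u" "u \<le> y" "u \<noteq> c" for u
      proof
        assume "u \<in> Z"
        with less.prems(3) u(2) have "u < y"
          by (auto simp: le_less)
        with c'_max[OF \<open>u \<in> Z\<close>] c_max[OF \<open>u \<in> Z\<close>] u z show False
          by (cases "u < c") auto
      qed
      have "card (Z \<inter> {x<..<z}) \<le> card (Z \<inter> {x<..<y} - {c})"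
        using z c by (intro card_mono) (auto simp: fin)
      also have "\<dots> < n"
        using card_Diff1_less[OF fin, of c "{x<..<y}"] c less.prems(4) by simp
      finally have "g x = g z"
        using less.hyps[OF _ z(3) less.prems(2) _ refl] gap z c by simp
      also have "g z = g y"
        using z c gap by (intro across[of z c y]) auto
      finally show ?thesis .
    qed
  qed
  then show "x \<notin> Z \<Longrightarrow> y \<notin> Z \<Longrightarrow> g x = g y"
    by (cases x y rule: linorder_cases) (blast, simp, metis)
qed

lemma sgn_eq_if_mult_pos: "(a::real) * b > 0 \<Longrightarrow> sgn a = sgn b"
  by (auto simp: zero_less_mult_iff sgn_if)

lemma sgn_eq_iff_mult_pos: "(a::real) \<noteq> 0 \<Longrightarrow> b \<noteq> 0 \<Longrightarrow> sgn a = sgn b \<longleftrightarrow> a * b > 0"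
  by (auto simp: sgn_if zero_less_mult_iff)

lemma sgn_eq_minus_if_mult_neg: "(a::real) * b < 0 \<Longrightarrow> sgn a = - sgn b"
  by (auto simp: mult_less_0_iff sgn_if)


section \<open>Monotone transfer matrices\<close>

definition wronskian :: "'a::idom poly \<Rightarrow> 'a poly \<Rightarrow> 'a poly" where
  "wronskian u v = u * pderiv v - v * pderiv u"

lemma poly_ext: "(\<And>t. poly p t = poly q t) \<Longrightarrow> p = (q :: 'a :: {idom, ring_char_0} poly)"
  by (rule poly_eq_poly_eq_iff[THEN iffD1]) auto

lemma wronskian_lincomb:
  fixes u v :: "real poly"
  shows "wronskian (smult g u + smult d v) (smult a u + smult b v) = smult (a * d - b * g) (wronskian v u)"
  unfolding wronskian_def by (intro poly_ext) (simp add: pderiv_add pderiv_smult algebra_simps)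

text \<open>A transfer matrix \<open>M = (p q; r s)\<close> of real polynomials with \<open>det M = 1\<close> that rotates
  every fixed nonzero real vector monotonically (positive Wronskian of the image), together with
  a trace level \<open>c0 = 2 cos \<gamma>\<close>; \<open>D = tr M - c0\<close> is then the characteristic function of the
  boundary condition \<open>[e^{i\<gamma>}K | -I]\<close>, and \<open>r\<close> the one of a separated condition.\<close>

locale monotone_transfer =
  fixes p q r s :: "real poly" and c0 :: real
  assumes det: "p * s - q * r = 1"
    and rotation: "\<And>t a b. (a, b) \<noteq> (0::real, 0::real) \<Longrightarrow>
      poly (wronskian (smult a r + smult b s) (smult a p + smult b q)) t > 0"
    and c0_bound: "\<bar>c0\<bar> \<le> 2"
begin

definition "D = p + s - [:c0:]"
definition "G11 = r * pderiv p - p * pderiv r"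
definition "G12 = s * pderiv p - q * pderiv r"
definition "G22 = s * pderiv q - q * pderiv s"

lemma pderiv_det: "pderiv p * s + p * pderiv s - pderiv q * r - q * pderiv r = 0"
proof -
  have "pderiv (p * s - q * r) = 0"
    by (simp add: det)
  then show ?thesis
    by (simp add: pderiv_diff pderiv_mult algebra_simps)
qed

lemma poly_det: "poly p t * poly s t - poly q t * poly r t = 1"
  using arg_cong[OF det, of "\<lambda>P. poly P t"] by simp

lemma poly_pderiv_det:
  "poly (pderiv p) t * poly s t + poly p t * poly (pderiv s) t
     - poly (pderiv q) t * poly r t - poly q t * poly (pderiv r) t = 0"
  using arg_cong[OF pderiv_det, of "\<lambda>P. poly P t"] by simp

lemma poly_wronskian_quadratic_form:
  "poly (wronskian (smult a r + smult b s) (smult a p + smult b q)) t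
     = a\<^sup>2 * poly G11 t + 2 * a * b * poly G12 t + b\<^sup>2 * poly G22 t"
proof -
  have "poly (wronskian (smult a r + smult b s) (smult a p + smult b q)) t
     = a\<^sup>2 * poly G11 t + 2 * a * b * poly G12 t + b\<^sup>2 * poly G22 t
       - a * b * (poly (pderiv p) t * poly s t + poly p t * poly (pderiv s) t
                  - poly (pderiv q) t * poly r t - poly q t * poly (pderiv r) t)"
    by (simp add: wronskian_def G11_def G12_def G22_def pderiv_add pderiv_smult algebra_simps
        power2_eq_square)
  then show ?thesis
    using poly_pderiv_det[of t] by simp
qed

lemma G11_pos: "poly G11 t > 0"
  using rotation[of 1 0 t] poly_wronskian_quadratic_form[of 1 0 t] by simp

lemma G_det_pos: "poly G11 t * poly G22 t - (poly G12 t)\<^sup>2 > 0"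
proof -
  have "(poly G12 t, - poly G11 t) \<noteq> (0, 0)"
    using G11_pos[of t] by auto
  then have "poly G11 t * (poly G11 t * poly G22 t - (poly G12 t)\<^sup>2) > 0"
    using rotation[of "poly G12 t" "- poly G11 t" t]
      poly_wronskian_quadratic_form[of "poly G12 t" "- poly G11 t" t]
    by (simp add: algebra_simps power2_eq_square)
  then show ?thesis
    using G11_pos[of t] by (simp add: zero_less_mult_iff)
qed

lemma pderiv_D: "pderiv D = - q * G11 + (p - s) * G12 + r * G22"
proof -
  have "- q * G11 + (p - s) * G12 + r * G22 = pderiv p + pderiv s
     + (pderiv p + pderiv s) * (p * s - q * r - 1)
     - s * (pderiv p * s + p * pderiv s - pderiv q * r - q * pderiv r)"
    by (intro poly_ext) (simp add: G11_def G12_def G22_def algebra_simps)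
  then show ?thesis
    by (simp add: det pderiv_det D_def pderiv_add pderiv_diff)
qed

text \<open>Away from the zeros of \<open>r\<close>, the roots of \<open>D\<close> in the stability region \<open>|tr M| \<le> 2\<close>
  are crossed in the direction given by the sign of \<open>r\<close>: completing the square in the
  positive definite form \<open>(G11, G12; G12, G22)\<close>.\<close>

lemma r_pderiv_D_pos:
  assumes rt: "poly r t \<noteq> 0" and trace: "\<bar>poly p t + poly s t\<bar> \<le> 2"
  shows "poly r t * poly (pderiv D) t > 0"
proof -
  define P Q R S where "P = poly p t" "Q = poly q t" "R = poly r t" "S = poly s t"
  define x y z where "x = poly G11 t" "y = poly G12 t" "z = poly G22 t"
  have x: "x > 0" and xz: "x * z - y\<^sup>2 > 0"
    using G11_pos G_det_pos by (simp_all add: x_y_z_def)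
  have QR: "Q * R = P * S - 1"
    using poly_det[of t] by (simp add: P_Q_R_S_def)
  have "(P + S - 2) * (P + S + 2) \<le> 0"
    using trace by (intro mult_nonpos_nonneg) (auto simp: P_Q_R_S_def)
  then have trace': "(P + S)\<^sup>2 \<le> 4"
    by (simp add: power2_eq_square algebra_simps)
  have "x * (R * (- Q * x + (P - S) * y + R * z))
      = - (Q * R) * x\<^sup>2 + (P - S) * R * x * y + R\<^sup>2 * x * z"
    by (simp add: algebra_simps power2_eq_square)
  also have "\<dots> = ((P - S) / 2 * x + R * y)\<^sup>2 + R\<^sup>2 * (x * z - y\<^sup>2) + x\<^sup>2 * ((4 - (P + S)\<^sup>2) / 4)"
    unfolding QR by (simp add: field_simps power2_eq_square)
  also have "\<dots> > 0"
    using rt xz trace' by (intro add_nonneg_pos add_pos_nonneg) (simp_all add: P_Q_R_S_def)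
  finally have "R * (- Q * x + (P - S) * y + R * z) > 0"
    using x by (simp add: zero_less_mult_iff)
  then show ?thesis
    by (simp add: pderiv_D P_Q_R_S_def x_y_z_def)
qed

lemma p_pderiv_r_neg: "poly r t = 0 \<Longrightarrow> poly (pderiv r) t * poly p t < 0"
  using G11_pos[of t] by (simp add: G11_def mult.commute)

text \<open>At a zero of \<open>r\<close> we have \<open>p s = 1\<close>, hence \<open>p D = p\<^sup>2 + 1 - c0 p \<ge> (|p| - 1)\<^sup>2\<close>.\<close>

lemma p_D_lower_bound:
  assumes "poly r t = 0"
  shows "poly p t * poly D t \<ge> (\<bar>poly p t\<bar> - 1)\<^sup>2"
proof -
  define P S where "P = poly p t" "S = poly s t"
  have PS: "P * S = 1"
    using poly_det[of t] assms by (simp add: P_S_def)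
  have "c0 * P \<le> \<bar>c0\<bar> * \<bar>P\<bar>"
    by (metis abs_ge_self abs_mult)
  also have "\<dots> \<le> 2 * \<bar>P\<bar>"
    using c0_bound by (intro mult_right_mono) auto
  finally have "P * (P + S - c0) \<ge> (\<bar>P\<bar> - 1)\<^sup>2"
    using PS by (simp add: power2_eq_square algebra_simps abs_mult_self_eq)
  then show ?thesis
    by (simp add: D_def P_S_def)
qed

lemma p_D_nonneg_at_root_r: "poly r t = 0 \<Longrightarrow> poly p t * poly D t \<ge> 0"
  using p_D_lower_bound[of t] by (meson order_trans zero_le_power2)

lemma common_root_r_D:
  assumes "poly r t = 0" "poly D t = 0"
  shows "poly s t = poly p t" "(poly p t)\<^sup>2 = 1"
proof -
  have "\<bar>poly p t\<bar> = 1"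
    using p_D_lower_bound[of t] assms by simp
  moreover have "poly p t * poly s t = 1"
    using poly_det[of t] assms(1) by simp
  ultimately show "poly s t = poly p t" "(poly p t)\<^sup>2 = 1"
    by (auto simp: abs_if power2_eq_square split: if_splits)
qed

lemma pderiv_D_at_common_root_r_D:
  assumes "poly r t = 0" "poly D t = 0"
  shows "poly (pderiv D) t = - poly q t * poly G11 t"
  using common_root_r_D[OF assms] assms(1) by (simp add: pderiv_D)

text \<open>At a common zero of \<open>r\<close>, \<open>q\<close> and \<open>D\<close> the root of \<open>D\<close> is double, and the sign of the
  second derivative is read off from \<open>G11 G22 - G12\<^sup>2 = - (r' q' + p'\<^sup>2)\<close>.\<close>

lemma pderiv2_D_p_neg:
  assumes rt: "poly r t = 0" and Dt: "poly D t = 0" and qt: "poly q t = 0"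
  shows "poly (pderiv (pderiv D)) t * poly p t < 0"
proof -
  note ps = common_root_r_D[OF rt Dt]
  define P p' q' r' s' where "P = poly p t" "p' = poly (pderiv p) t" "q' = poly (pderiv q) t"
    "r' = poly (pderiv r) t" "s' = poly (pderiv s) t"
  have P2: "P\<^sup>2 = 1"
    using ps by (simp add: P_p'_q'_r'_s'_def)
  have "P * (p' + s') = 0"
    using poly_pderiv_det[of t] rt qt ps by (simp add: P_p'_q'_r'_s'_def algebra_simps)
  then have s': "s' = - p'"
    using P2 by auto
  have "poly (pderiv (pderiv D)) t
      = - q' * poly G11 t + (p' - s') * poly G12 t + r' * poly G22 t"
    using rt qt ps by (simp add: pderiv_D pderiv_add pderiv_mult pderiv_diff pderiv_minus
        P_p'_q'_r'_s'_def)
  also have "\<dots> = P * (2 * q' * r' + 2 * p'\<^sup>2)"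
    using rt qt ps s' by (simp add: G11_def G12_def G22_def P_p'_q'_r'_s'_def
        algebra_simps power2_eq_square)
  finally have "poly (pderiv (pderiv D)) t * poly p t = (P * P) * (2 * q' * r' + 2 * p'\<^sup>2)"
    by (simp add: P_p'_q'_r'_s'_def algebra_simps)
  also have "\<dots> = 2 * (r' * q' + p'\<^sup>2)"
    using P2 by (simp add: power2_eq_square algebra_simps)
  moreover have "poly G11 t * poly G22 t - (poly G12 t)\<^sup>2 = - ((poly p t)\<^sup>2 * (r' * q' + p'\<^sup>2))"
    using rt qt ps(1) s' by (simp add: G11_def G12_def G22_def P_p'_q'_r'_s'_def
        algebra_simps power2_eq_square)
  ultimately show ?thesis
    using G_det_pos[of t] ps(2) by simp
qed

lemma order_D:
  assumes Dc: "poly D c = 0"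
  shows "order c D = (if poly r c = 0 \<and> poly q c = 0 then 2 else 1)"
proof (cases "poly r c = 0")
  case False
  have "\<bar>poly p c + poly s c\<bar> \<le> 2"
    using Dc c0_bound by (simp add: D_def)
  then have "poly (pderiv D) c \<noteq> 0"
    using r_pderiv_D_pos[OF False] by auto
  then show ?thesis
    using order_eq_1_if_simple_root[OF Dc] False by simp
next
  case True
  show ?thesis
  proof (cases "poly q c = 0")
    case False
    then have "poly (pderiv D) c \<noteq> 0"
      using pderiv_D_at_common_root_r_D[OF True Dc] G11_pos[of c] by simp
    then show ?thesis
      using order_eq_1_if_simple_root[OF Dc] False by simp
  next
    case qc: True
    have "poly (pderiv D) c = 0"
      using pderiv_D_at_common_root_r_D[OF True Dc] qc by simp
    moreover have "poly (pderiv (pderiv D)) c \<noteq> 0"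
      using pderiv2_D_p_neg[OF True Dc qc] by auto
    ultimately show ?thesis
      using order_eq_2_if_double_root[OF Dc] True qc by simp
  qed
qed

end


section \<open>Interlacing of root counts\<close>

locale real_rooted_transfer = monotone_transfer +
  assumes D_nonzero: "D \<noteq> 0" and r_nonzero: "r \<noteq> 0"
    and D_real_roots: "\<And>z. poly (cpoly D) z = 0 \<Longrightarrow> z \<in> \<real>"
    and r_real_roots: "\<And>z. poly (cpoly r) z = 0 \<Longrightarrow> z \<in> \<real>"
begin

text \<open>The index is constant off the zeros of \<open>r D\<close>; comparing its values below and above all
  zeros bounds the difference of the two counting functions.\<close>

definition sign_index :: "real \<Rightarrow> int" where
  "sign_index t = int (root_count r t) - int (root_count D t) + of_bool (sgn (poly D t) = sgn (poly r t))"

definition "crit = {x. poly r x = 0} \<union> {x. poly D x = 0}"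

lemma finite_crit: "finite crit"
  using poly_roots_finite[OF r_nonzero] poly_roots_finite[OF D_nonzero] by (simp add: crit_def)

lemma sign_index_eq_if_no_crit:
  assumes "x \<le> y" "\<And>u. x \<le> u \<Longrightarrow> u \<le> y \<Longrightarrow> u \<notin> crit"
  shows "sign_index x = sign_index y"
proof -
  have "poly r u \<noteq> 0" "poly D u \<noteq> 0" if "x \<le> u" "u \<le> y" for u
    using assms(2)[OF that] by (auto simp: crit_def)
  then show ?thesis
    using assms(1) root_count_eq_if_no_root[of x y r] root_count_eq_if_no_root[of x y D]
      poly_sgn_eq_if_no_root[of x y r] poly_sgn_eq_if_no_root[of x y D]
    by (simp add: sign_index_def)
qed

lemma sign_index_across_root_of_D:
  assumes xcy: "x < c" "c < y" and rc: "poly r c \<noteq> 0" and Dc: "poly D c = 0"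
    and r: "\<And>u. x \<le> u \<Longrightarrow> u \<le> y \<Longrightarrow> u \<noteq> c \<Longrightarrow> poly r u \<noteq> 0"
    and D: "\<And>u. x \<le> u \<Longrightarrow> u \<le> y \<Longrightarrow> u \<noteq> c \<Longrightarrow> poly D u \<noteq> 0"
  shows "sign_index x = sign_index y"
proof -
  have "\<bar>poly p c + poly s c\<bar> \<le> 2"
    using Dc c0_bound by (simp add: D_def)
  then have pos: "poly r c * poly (pderiv D) c > 0"
    using r_pderiv_D_pos[OF rc] by simp
  then have D'c: "poly (pderiv D) c \<noteq> 0"
    by auto
  have r_no_root: "poly r u \<noteq> 0" if "x \<le> u" "u \<le> y" for u
    using r[OF that] rc by (cases "u = c") auto
  have "sgn (poly r x) = sgn (poly r c)" "sgn (poly r c) = sgn (poly r y)"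
    by (rule poly_sgn_eq_if_no_root; use xcy r_no_root in simp)+
  moreover have "sgn (poly D y) = sgn (poly r c)" "sgn (poly D x) = - sgn (poly r c)"
    using sgn_poly_near_simple_root[OF Dc D'c xcy D] sgn_eq_if_mult_pos[OF pos] by simp_all
  moreover have "root_count r y = root_count r x"
    using xcy by (intro root_count_eq_if_no_root r_no_root) auto
  moreover have "root_count D y = root_count D x + 1"
    using root_count_across_root[OF D_nonzero xcy] D order_eq_1_if_simple_root[OF Dc D'c] by auto
  moreover have "- sgn (poly r c) \<noteq> sgn (poly r c)"
    using rc by (simp add: sgn_if)
  ultimately show ?thesis
    by (simp add: sign_index_def)
qed

lemma sign_index_across_root_of_r:
  assumes xcy: "x < c" "c < y" and rc: "poly r c = 0"
    and r: "\<And>u. x \<le> u \<Longrightarrow> u \<le> y \<Longrightarrow> u \<noteq> c \<Longrightarrow> poly r u \<noteq> 0"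
    and D: "\<And>u. x \<le> u \<Longrightarrow> u \<le> y \<Longrightarrow> u \<noteq> c \<Longrightarrow> poly D u \<noteq> 0"
  shows "sign_index x = sign_index y"
proof -
  have neg: "poly (pderiv r) c * poly p c < 0"
    using p_pderiv_r_neg[OF rc] .
  then have r'c: "poly (pderiv r) c \<noteq> 0" and pc: "poly p c \<noteq> 0"
    by auto
  have sgn_p: "- sgn (poly p c) \<noteq> sgn (poly p c)"
    using pc by (simp add: sgn_if)
  have sgn_r: "sgn (poly r y) = - sgn (poly p c)" "sgn (poly r x) = sgn (poly p c)"
    using sgn_poly_near_simple_root[OF rc r'c xcy r] sgn_eq_minus_if_mult_neg[OF neg] by simp_all
  have count_r: "root_count r y = root_count r x + 1"
    using root_count_across_root[OF r_nonzero xcy] r order_eq_1_if_simple_root[OF rc r'c] by auto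
  have count_D: "root_count D y = root_count D x + order c D"
    using root_count_across_root[OF D_nonzero xcy] D by auto
  consider (not_root) "poly D c \<noteq> 0"
    | (simple) "poly D c = 0" "poly (pderiv D) c \<noteq> 0"
    | (double) "poly D c = 0" "poly (pderiv D) c = 0"
    by blast
  then show ?thesis
  proof cases
    case not_root
    have D_no_root: "poly D u \<noteq> 0" if "x \<le> u" "u \<le> y" for u
      using D[OF that] not_root by (cases "u = c") auto
    have "poly p c * poly D c > 0"
      using p_D_nonneg_at_root_r[OF rc] not_root pc by (simp add: less_le)
    then have "sgn (poly D c) = sgn (poly p c)"
      using sgn_eq_if_mult_pos by metis
    moreover have "sgn (poly D x) = sgn (poly D c)" "sgn (poly D c) = sgn (poly D y)"
      by (rule poly_sgn_eq_if_no_root; use xcy D_no_root in simp)+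
    moreover have "order c D = 0"
      using not_root by (rule order_0I)
    ultimately show ?thesis
      using sgn_r count_r count_D sgn_p by (simp add: sign_index_def)
  next
    case simple
    then show ?thesis
      using sgn_poly_near_simple_root[OF simple xcy D] order_eq_1_if_simple_root[OF simple]
        sgn_r count_r count_D by (auto simp: sign_index_def)
  next
    case double
    have "poly q c = 0"
      using pderiv_D_at_common_root_r_D[OF rc double(1)] double(2) G11_pos[of c] by simp
    then have neg2: "poly (pderiv (pderiv D)) c * poly p c < 0"
      using pderiv2_D_p_neg[OF rc double(1)] by simp
    then have "poly (pderiv (pderiv D)) c \<noteq> 0"
      by auto
    then show ?thesis
      using sgn_poly_near_double_root[OF double _ xcy D] order_eq_2_if_double_root[OF double]
        sgn_eq_minus_if_mult_neg[OF neg2] sgn_r count_r count_D sgn_p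
      by (simp add: sign_index_def)
  qed
qed

lemma sign_index_eq:
  assumes "x \<notin> crit" "y \<notin> crit"
  shows "sign_index x = sign_index y"
proof (rule eq_off_finite_set[OF finite_crit _ sign_index_eq_if_no_crit assms])
  fix x c y
  assume xcy: "x < c" "c < y" "c \<in> crit"
    and gap: "\<And>u. x \<le> u \<Longrightarrow> u \<le> y \<Longrightarrow> u \<noteq> c \<Longrightarrow> u \<notin> crit"
  have r: "poly r u \<noteq> 0" and D: "poly D u \<noteq> 0" if "x \<le> u" "u \<le> y" "u \<noteq> c" for u
    using gap[OF that] by (auto simp: crit_def)
  show "sign_index x = sign_index y"
  proof (cases "poly r c = 0")
    case True
    then show ?thesis
      using sign_index_across_root_of_r[OF xcy(1,2) True r D] by blast
  next
    case False
    then have "poly D c = 0"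
      using xcy(3) by (simp add: crit_def)
    with False show ?thesis
      using sign_index_across_root_of_D[OF xcy(1,2) False _ r D] by blast
  qed
qed (auto simp: crit_def)

definition "index_at_top =
  int (degree r) - int (degree D) + of_bool (sgn (lead_coeff D) = sgn (lead_coeff r))"

lemma sign_index_eq_index_at_top:
  assumes "x \<notin> crit"
  shows "sign_index x = index_at_top"
proof -
  define b where "b = Max (insert x crit) + 1"
  have b: "u < b" if "u \<in> crit" for u
    using Max_ge[OF _ insertI2[OF that], of x] finite_crit unfolding b_def by simp
  have no_root: "poly r u \<noteq> 0 \<and> poly D u \<noteq> 0" if "b \<le> u" for u
    using b[of u] that by (auto simp: crit_def)
  have "root_count r b = degree r" "root_count D b = degree D"
    using b r_nonzero D_nonzero r_real_roots D_real_roots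
    by (auto intro!: root_count_above_roots simp: crit_def less_imp_le)
  moreover have "sgn (poly r b) = sgn (lead_coeff r)" "sgn (poly D b) = sgn (lead_coeff D)"
    using no_root r_nonzero D_nonzero by (auto intro!: sgn_poly_at_top)
  ultimately have "sign_index b = index_at_top"
    by (simp add: sign_index_def index_at_top_def)
  moreover have "b \<notin> crit"
    using b by blast
  ultimately show ?thesis
    using sign_index_eq[OF assms] by simp
qed

lemma index_at_top_cases: "index_at_top \<in> {0, 1}"
proof -
  define a where "a = Min (insert 0 crit) - 1"
  have a: "a < u" if "u \<in> crit" for u
    using Min_le[OF _ insertI2[OF that], of 0] finite_crit unfolding a_def by simp
  have "root_count r a = 0" "root_count D a = 0"
    using a by (auto intro!: root_count_below_roots simp: crit_def)
  then have "sign_index a \<in> {0, 1}"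
    by (simp add: sign_index_def)
  moreover have "a \<notin> crit"
    using a by blast
  ultimately show ?thesis
    using sign_index_eq_index_at_top by simp
qed

theorem root_count_interlace:
  "int (root_count r t) - int (root_count D t) \<in> {index_at_top - 1, index_at_top}"
proof -
  obtain y where y: "t < y" "\<And>u. t < u \<Longrightarrow> u \<le> y \<Longrightarrow> u \<notin> crit"
  proof (cases "crit \<inter> {t<..} = {}")
    case True
    then show ?thesis
      using that[of "t + 1"] by auto
  next
    case False
    define m where "m = Min (crit \<inter> {t<..})"
    have m: "t < m" "\<And>u. u \<in> crit \<Longrightarrow> t < u \<Longrightarrow> m \<le> u"
      using Min_in[OF _ False] Min_le[of "crit \<inter> {t<..}"] finite_crit by (auto simp: m_def)
    show ?thesis
      by (rule that[of "(t + m) / 2"]) (use m in force)+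
  qed
  have "root_count r y = root_count r t" "root_count D y = root_count D t"
    using y by (auto intro!: root_count_eq_if_no_root simp: crit_def less_imp_le)
  moreover have "sign_index y = index_at_top"
    using y by (intro sign_index_eq_index_at_top) auto
  ultimately show ?thesis
    by (cases "sgn (poly D y) = sgn (poly r y)") (auto simp: sign_index_def)
qed

end


lemma kernel_row:
  fixes A B a b :: complex
  assumes "(A, B) \<noteq> (0, 0)"
  shows "A * a + B * b = 0 \<longleftrightarrow> (\<exists>t. a = t * - B \<and> b = t * A)"
proof
  assume h: "A * a + B * b = 0"
  show "\<exists>t. a = t * - B \<and> b = t * A"
  proof (cases "A = 0")
    case True
    with assms h show ?thesis
      by (intro exI[of _ "- a / B"]) auto
  next
    case False
    with h show ?thesis
      by (intro exI[of _ "b / A"]) (auto simp: field_simps add_eq_0_iff)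
  qed
qed (auto simp: algebra_simps)

lemma kernel_singular_2x2:
  fixes A B C D :: complex
  assumes det: "A * D - B * C = 0" and nonzero: "\<not> (A = 0 \<and> B = 0 \<and> C = 0 \<and> D = 0)"
  obtains v1 v2 where "(v1, v2) \<noteq> (0, 0)"
    "\<And>a b. (A * a + B * b = 0 \<and> C * a + D * b = 0) \<longleftrightarrow> (\<exists>t. a = t * v1 \<and> b = t * v2)"
proof (cases "(A, B) = (0, 0)")
  case False
  show ?thesis
  proof (rule that[of "- B" A])
    fix a b
    have "C * (t * - B) + D * (t * A) = 0" for t
      using det by (simp add: algebra_simps)
    then show "(A * a + B * b = 0 \<and> C * a + D * b = 0) \<longleftrightarrow> (\<exists>t. a = t * - B \<and> b = t * A)"
      using kernel_row[OF False] by blast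
  qed (use False in auto)
next
  case True
  then have "(C, D) \<noteq> (0, 0)"
    using nonzero by auto
  with True show ?thesis
    using kernel_row that[of "- D" C] by auto
qed

lemma det_zero_if_kernel:
  fixes A B C D a b :: complex
  assumes "A * a + B * b = 0" "C * a + D * b = 0" "(a, b) \<noteq> (0, 0)"
  shows "A * D - B * C = 0"
proof -
  have "a * (A * D - B * C) = D * (A * a + B * b) - B * (C * a + D * b)"
    "b * (A * D - B * C) = A * (C * a + D * b) - C * (A * a + B * b)"
    by (simp_all add: algebra_simps)
  with assms show ?thesis
    by auto
qed

lemma real_dependent_imp_form_zero:
  fixes A B :: complex and u v :: real
  assumes "(u, v) \<noteq> (0, 0)" "of_real u * A + of_real v * B = 0"
  shows "A * cnj B - B * cnj A = 0"
proof (cases "v = 0")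
  case True
  with assms have "A = 0"
    by auto
  then show ?thesis
    by simp
next
  case False
  with assms(2) have "B = - of_real (u / v) * A"
    by (simp add: field_simps add_eq_0_iff)
  then show ?thesis
    by (simp add: algebra_simps)
qed

interpretation seq: vector_space "\<lambda>(c::complex) (y::nat \<Rightarrow> complex) n. c * y n"
  by unfold_locales (auto simp: fun_eq_iff algebra_simps)

lemma dim_line:
  fixes u :: "nat \<Rightarrow> complex"
  assumes "u \<noteq> 0"
  shows "seq.dim (range (\<lambda>t n. t * u n)) = 1"
proof -
  have "seq.dim (range (\<lambda>t n. t * u n)) = seq.dim {u}"
    by (simp add: seq.span_singleton[symmetric])
  also have "\<dots> = 1"
    using seq.dim_eq_card_independent[of "{u}"] assms by simp
  finally show ?thesis .
qed

lemma dim_plane: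
  fixes u v :: "nat \<Rightarrow> complex"
  assumes v: "v \<noteq> 0" and uv: "\<And>k. u \<noteq> (\<lambda>n. k * v n)"
  shows "seq.dim {y. \<exists>a b. y = (\<lambda>n. a * u n + b * v n)} = 2"
proof -
  have sp: "seq.span {v} = range (\<lambda>k n. k * v n)"
    by (simp add: seq.span_singleton)
  have "seq.span {u, v} = {x. \<exists>k. x - (\<lambda>n. k * u n) \<in> seq.span {v}}"
    by (rule seq.span_insert)
  also have "\<dots> = {y. \<exists>a b. y = (\<lambda>n. a * u n + b * v n)}"
    unfolding sp
  proof safe
    fix x k c
    assume "x - (\<lambda>n. k * u n) = (\<lambda>n. c * v n)"
    then have "x = (\<lambda>n. k * u n + c * v n)"
      by (auto simp: fun_eq_iff algebra_simps dest: fun_cong)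
    then show "\<exists>a b. x = (\<lambda>n. a * u n + b * v n)"
      by blast
  next
    fix a b
    have "(\<lambda>n. a * u n + b * v n) - (\<lambda>n. a * u n) = (\<lambda>n. b * v n)"
      by (simp add: fun_eq_iff)
    then show "\<exists>k. (\<lambda>n. a * u n + b * v n) - (\<lambda>n. k * u n) \<in> range (\<lambda>k n. k * v n)"
      by blast
  qed
  finally have "seq.dim {y. \<exists>a b. y = (\<lambda>n. a * u n + b * v n)} = seq.dim {u, v}"
    using seq.dim_span[of "{u, v}"] by simp
  also have "\<dots> = card {u, v}"
  proof (rule seq.dim_eq_card_independent)
    have "u \<noteq> v" "u \<notin> seq.span {v}"
      using uv[of 1] uv unfolding sp by auto
    then show "seq.independent {u, v}"
      using v by (simp add: seq.independent_insert)
  qed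
  also have "\<dots> = 2"
    using uv[of 1] by auto
  finally show ?thesis .
qed

lemma kernel_nontrivial_if_det_zero:
  fixes A B C D :: complex
  assumes "A * D - B * C = 0"
  obtains a b where "(a, b) \<noteq> (0, 0)" "A * a + B * b = 0" "C * a + D * b = 0"
proof (cases "A = 0 \<and> B = 0 \<and> C = 0 \<and> D = 0")
  case True
  then show ?thesis
    using that[of 1 0] by simp
next
  case False
  then obtain v1 v2 where "(v1, v2) \<noteq> (0, 0)"
    "\<And>a b. (A * a + B * b = 0 \<and> C * a + D * b = 0) \<longleftrightarrow> (\<exists>t. a = t * v1 \<and> b = t * v2)"
    using kernel_singular_2x2[OF assms] by blast
  then show ?thesis
    using that[of v1 v2] by (metis mult_1)
qed

lemma size_filter_sum_replicate_mset:
  fixes g :: "'a \<Rightarrow> nat"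
  assumes "finite A"
  shows "size (filter_mset P (\<Sum>x\<in>A. replicate_mset (g x) x)) = (\<Sum>x | x \<in> A \<and> P x. g x)"
  using assms
proof (induct A rule: finite_induct)
  case (insert a A)
  have "filter_mset P (replicate_mset k a) = (if P a then replicate_mset k a else {#})" for k
    by (induct k) auto
  moreover have "{x. x \<in> insert a A \<and> P x} = (if P a then insert a {x. x \<in> A \<and> P x} else {x. x \<in> A \<and> P x})"
    by auto
  ultimately show ?case
    using insert by simp
qed simp

lemma sorted_nth_le_iff:
  fixes xs :: "'a::linorder list"
  assumes "sorted xs"
  shows "n < length (filter (\<lambda>x. x \<le> t) xs) \<longleftrightarrow> n < length xs \<and> xs ! n \<le> t"
proof
  assume h: "n < length (filter (\<lambda>x. x \<le> t) xs)"
  then have len: "n < length xs"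
    using length_filter_le[of "\<lambda>x. x \<le> t" xs] by linarith
  show "n < length xs \<and> xs ! n \<le> t"
  proof (rule ccontr)
    assume "\<not> (n < length xs \<and> xs ! n \<le> t)"
    then have gt: "t < xs ! n"
      using len by auto
    have "i < n" if "i < length xs" "xs ! i \<le> t" for i
    proof (rule ccontr)
      assume "\<not> i < n"
      then have "xs ! n \<le> xs ! i"
        using assms that(1) by (simp add: sorted_iff_nth_mono)
      with gt that(2) show False
        by simp
    qed
    then have "{i. i < length xs \<and> xs ! i \<le> t} \<subseteq> {..<n}"
      by auto
    then have "card {i. i < length xs \<and> xs ! i \<le> t} \<le> n"
      using card_mono[of "{..<n}"] by fastforce
    then show False
      using h by (simp add: length_filter_conv_card)
  qed
next
  assume h: "n < length xs \<and> xs ! n \<le> t"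
  then have "{..n} \<subseteq> {i. i < length xs \<and> xs ! i \<le> t}"
    using assms by (auto simp: sorted_iff_nth_mono dest: order_trans)
  then have "card {..n} \<le> card {i. i < length xs \<and> xs ! i \<le> t}"
    by (intro card_mono) auto
  then show "n < length (filter (\<lambda>x. x \<le> t) xs)"
    by (simp add: length_filter_conv_card)
qed

lemma sorted_list_of_multiset_interlace:
  fixes A B :: "'a::linorder multiset"
  assumes count: "\<And>t. size (filter_mset (\<lambda>x. x \<le> t) A) \<le> size (filter_mset (\<lambda>x. x \<le> t) B) + j"
    and n: "n + j < size A"
  shows "sorted_list_of_multiset B ! n \<le> sorted_list_of_multiset A ! (n + j)"
proof -
  define xs ys t where "xs = sorted_list_of_multiset A" "ys = sorted_list_of_multiset B"
    "t = sorted_list_of_multiset A ! (n + j)"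
  have size: "size (filter_mset (\<lambda>x. x \<le> t) C) = length (filter (\<lambda>x. x \<le> t) (sorted_list_of_multiset C))"
    for C :: "'a multiset"
    by (metis mset_filter mset_sorted_list_of_multiset size_mset)
  have "length xs = size A"
    using size_mset[of xs] by (simp add: xs_ys_t_def)
  then have "n + j < length (filter (\<lambda>x. x \<le> t) xs)"
    using sorted_nth_le_iff[of xs] n by (simp add: xs_ys_t_def)
  then have "n < length (filter (\<lambda>x. x \<le> t) ys)"
    using count[of t] size[of A] size[of B] by (simp add: xs_ys_t_def)
  then show ?thesis
    using sorted_nth_le_iff[of ys] by (simp add: xs_ys_t_def)
qed


section \<open>The difference equation\<close>

text \<open>A solution is determined by
  \<open>(y\<^sub>0, f\<^sub>0 \<Delta>y\<^sub>0) = (x, y)\<close>; \<open>sol_poly x y n\<close> and \<open>qder_poly x y n\<close> are \<open>y\<^sub>n\<close> and the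
  quasi-derivative \<open>f\<^sub>n \<Delta>y\<^sub>n\<close> as polynomials in \<open>\<lambda>\<close>.\<close>

locale sl_equation =
  fixes N :: nat and f q w :: "nat \<Rightarrow> real"
  assumes N2: "N \<ge> 2" and f_nonzero: "\<forall>n\<le>N. f n \<noteq> 0" and w_pos: "\<forall>n\<in>{1..N}. w n > 0"
begin

fun transfer :: "real \<Rightarrow> real \<Rightarrow> nat \<Rightarrow> real poly \<times> real poly" where
  "transfer x y 0 = ([:x:], [:y:])"
| "transfer x y (Suc n) =
     (let (u, v) = transfer x y n; u' = u + smult (1 / f n) v
      in (u', v + [:q (Suc n), - w (Suc n):] * u'))"

definition "sol_poly x y n = fst (transfer x y n)"
definition "qder_poly x y n = snd (transfer x y n)"

lemma sol_poly_0 [simp]: "sol_poly x y 0 = [:x:]"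
  and qder_poly_0 [simp]: "qder_poly x y 0 = [:y:]"
  by (simp_all add: sol_poly_def qder_poly_def)

lemma sol_poly_Suc: "sol_poly x y (Suc n) = sol_poly x y n + smult (1 / f n) (qder_poly x y n)"
  and qder_poly_Suc:
    "qder_poly x y (Suc n) = qder_poly x y n + [:q (Suc n), - w (Suc n):] * sol_poly x y (Suc n)"
  by (simp_all add: sol_poly_def qder_poly_def split_beta Let_def)

lemma f0: "f 0 \<noteq> 0" and f1: "f 1 \<noteq> 0" and w1: "w 1 > 0" and wN: "w N > 0"
  using f_nonzero w_pos N2 by auto

lemma transfer_linear:
  "sol_poly x y n = smult x (sol_poly 1 0 n) + smult y (sol_poly 0 1 n) \<and>
   qder_poly x y n = smult x (qder_poly 1 0 n) + smult y (qder_poly 0 1 n)"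
proof (induct n)
  case 0
  then show ?case
    by (simp add: poly_eq_iff)
next
  case (Suc n)
  then show ?case
    by (auto intro!: poly_ext simp: sol_poly_Suc qder_poly_Suc algebra_simps)
qed

lemma det_transfer: "sol_poly 1 0 n * qder_poly 0 1 n - sol_poly 0 1 n * qder_poly 1 0 n = 1"
proof (induct n)
  case (Suc n)
  define l where "l = [:q (Suc n), - w (Suc n):]"
  have "sol_poly 1 0 (Suc n) * qder_poly 0 1 (Suc n) - sol_poly 0 1 (Suc n) * qder_poly 1 0 (Suc n)
      = sol_poly 1 0 n * qder_poly 0 1 n - sol_poly 0 1 n * qder_poly 1 0 n"
    unfolding qder_poly_Suc sol_poly_Suc l_def[symmetric]
    by (intro poly_ext) (simp add: algebra_simps)
  with Suc show ?case
    by simp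
qed simp

lemma wronskian_transfer:
  "wronskian (qder_poly x y n) (sol_poly x y n) = (\<Sum>k\<in>{1..n}. smult (w k) (sol_poly x y k ^ 2))"
proof (induct n)
  case (Suc n)
  define u v u' l where "u = sol_poly x y n" "v = qder_poly x y n" "u' = sol_poly x y (Suc n)"
    "l = [:q (Suc n), - w (Suc n):]"
  have u': "u' = u + smult (1 / f n) v"
    by (simp add: u_v_u'_l_def sol_poly_Suc)
  have "pderiv l = [:- w (Suc n):]"
    by (simp add: u_v_u'_l_def pderiv_pCons)
  then have "wronskian (v + l * u') u' = wronskian v u + smult (w (Suc n)) (u' ^ 2)"
    unfolding u' wronskian_def
    by (intro poly_ext) (simp add: pderiv_add pderiv_mult pderiv_smult algebra_simps power2_eq_square)
  then show ?case
    using Suc by (simp add: qder_poly_Suc u_v_u'_l_def)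
qed (simp add: wronskian_def)

lemma sol_poly_1_or_2_nonzero:
  assumes "(x, y) \<noteq> (0, 0)"
  shows "poly (sol_poly x y 1) t \<noteq> 0 \<or> poly (sol_poly x y 2) t \<noteq> 0"
proof -
  have a1: "poly (sol_poly x y 1) t = x + y / f 0"
    by (simp add: sol_poly_Suc[of x y 0])
  have b1: "poly (qder_poly x y 1) t = y + (q 1 - w 1 * t) * (x + y / f 0)"
    by (simp add: qder_poly_Suc[of x y 0] sol_poly_Suc[of x y 0] algebra_simps)
  have "sol_poly x y 2 = sol_poly x y 1 + smult (1 / f 1) (qder_poly x y 1)"
    using sol_poly_Suc[of x y 1] by (simp add: numeral_2_eq_2)
  then have a2: "poly (sol_poly x y 2) t = poly (sol_poly x y 1) t + poly (qder_poly x y 1) t / f 1"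
    by (simp add: divide_inverse mult.commute)
  show ?thesis
  proof (cases "x + y / f 0 = 0")
    case True
    then have "y \<noteq> 0"
      using assms f0 by auto
    then show ?thesis
      using a1 a2 b1 True f1 by simp
  qed (use a1 in simp)
qed

lemma wronskian_transfer_pos:
  assumes "(x, y) \<noteq> (0, 0)"
  shows "poly (wronskian (qder_poly x y N) (sol_poly x y N)) t > 0"
proof -
  obtain k where k: "k \<in> {1..N}" "poly (sol_poly x y k) t \<noteq> 0"
    using sol_poly_1_or_2_nonzero[OF assms, of t] N2
    by (metis atLeastAtMost_iff le_numeral_extra(4) one_le_numeral order.trans)
  have "0 < w k * (poly (sol_poly x y k) t)\<^sup>2"
    using k w_pos by simp
  also have "\<dots> \<le> (\<Sum>k\<in>{1..N}. w k * (poly (sol_poly x y k) t)\<^sup>2)"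
    using k w_pos by (intro member_le_sum) (auto simp: order.strict_implies_order)
  finally show ?thesis
    by (simp add: wronskian_transfer poly_sum)
qed

definition "m11 = sol_poly 1 0 N"
definition "m12 = sol_poly 0 1 N"
definition "m21 = qder_poly 1 0 N"
definition "m22 = qder_poly 0 1 N"

lemma sol_poly_N: "sol_poly x y N = smult x m11 + smult y m12"
  and qder_poly_N: "qder_poly x y N = smult x m21 + smult y m22"
  unfolding m11_def m12_def m21_def m22_def by (fact conjunct1[OF transfer_linear] conjunct2[OF transfer_linear])+

lemma det_m: "m11 * m22 - m12 * m21 = 1"
  using det_transfer[of N] by (simp add: m11_def m12_def m21_def m22_def)

text \<open>Leading coefficients: each step multiplies by \<open>- w\<^sub>n / f\<^sub>n\<close> and raises the degree by one,
  starting from the first index where \<open>y\<^sub>n\<close> does not vanish identically.\<close>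

lemma degree_transfer_from:
  assumes "1 \<le> n0" "n0 \<le> n" "n \<le> N"
    and start: "degree (sol_poly x y n0) \<le> d0" "coeff (sol_poly x y n0) d0 = c"
      "degree (qder_poly x y n0) \<le> Suc d0" "coeff (qder_poly x y n0) (Suc d0) = - c * w n0"
  shows "degree (sol_poly x y n) \<le> d0 + (n - n0)
    \<and> coeff (sol_poly x y n) (d0 + (n - n0)) = c * (\<Prod>k\<in>{n0..<n}. - w k / f k)
    \<and> degree (qder_poly x y n) \<le> Suc (d0 + (n - n0))
    \<and> coeff (qder_poly x y n) (Suc (d0 + (n - n0))) = - c * (\<Prod>k\<in>{n0..<n}. - w k / f k) * w n"
  using assms(2,3)
proof (induct n rule: dec_induct)
  case base
  then show ?case
    using start by simp
next
  case (step n)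
  define e Pr where "e = d0 + (n - n0)" "Pr = (\<Prod>k\<in>{n0..<n}. - w k / f k)"
  have IH: "degree (sol_poly x y n) \<le> e" "coeff (sol_poly x y n) e = c * Pr"
    "degree (qder_poly x y n) \<le> Suc e" "coeff (qder_poly x y n) (Suc e) = - c * Pr * w n"
    using step by (auto simp: e_Pr_def)
  have fn: "f n \<noteq> 0"
    using f_nonzero step by auto
  have e': "d0 + (Suc n - n0) = Suc e"
    using step by (simp add: e_Pr_def)
  have Pr': "(\<Prod>k\<in>{n0..<Suc n}. - w k / f k) = Pr * (- w n / f n)"
    using step by (simp add: e_Pr_def prod.atLeastLessThan_Suc)
  have A: "sol_poly x y (Suc n) = sol_poly x y n + smult (1 / f n) (qder_poly x y n)"
    by (rule sol_poly_Suc)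
  have dA: "degree (sol_poly x y (Suc n)) \<le> Suc e"
    unfolding A using IH by (intro degree_add_le) (auto intro: le_trans[OF degree_smult_le])
  have cA: "coeff (sol_poly x y (Suc n)) (Suc e) = c * Pr * (- w n / f n)"
    unfolding A using IH fn coeff_eq_0[of "sol_poly x y n" "Suc e"] by (simp add: field_simps)
  have B: "qder_poly x y (Suc n) = qder_poly x y n + smult (q (Suc n)) (sol_poly x y (Suc n))
      + pCons 0 (smult (- w (Suc n)) (sol_poly x y (Suc n)))"
    by (simp add: qder_poly_Suc mult_pCons_left)
  have dB: "degree (qder_poly x y (Suc n)) \<le> Suc (Suc e)"
    unfolding B using IH dA
    by (intro degree_add_le) (auto intro: le_trans[OF degree_smult_le] simp: degree_pCons_le le_SucI)
  have cB: "coeff (qder_poly x y (Suc n)) (Suc (Suc e)) = - (c * Pr * (- w n / f n)) * w (Suc n)"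
    unfolding B using cA IH(3) dA coeff_eq_0[of "qder_poly x y n" "Suc (Suc e)"]
      coeff_eq_0[of "sol_poly x y (Suc n)" "Suc (Suc e)"] by simp
  show ?case
    unfolding e' Pr' using dA cA dB cB by (simp add: algebra_simps)
qed

definition "weight_prod a = (\<Prod>k\<in>{a..<N}. - w k / f k)"

lemma weight_prod_nonzero: "1 \<le> a \<Longrightarrow> weight_prod a \<noteq> 0"
  using f_nonzero w_pos by (auto simp: weight_prod_def prod_zero_iff)
    (metis atLeastAtMost_iff less_imp_le order.strict_trans2 order.trans less_irrefl)

lemma weight_prod_1: "weight_prod 1 = (- w 1 / f 1) * weight_prod 2"
  using N2 by (simp add: weight_prod_def prod.atLeast_Suc_lessThan numeral_2_eq_2)

lemma degree_transfer_y1_nonzero: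
  assumes "x + y / f 0 \<noteq> 0"
  shows "degree (sol_poly x y N) \<le> N - 1"
    "coeff (sol_poly x y N) (N - 1) = (x + y / f 0) * weight_prod 1"
    "degree (qder_poly x y N) = N"
    "coeff (qder_poly x y N) N = - (x + y / f 0) * weight_prod 1 * w N"
proof -
  have "sol_poly x y 1 = [:x + y / f 0:]"
    by (simp add: sol_poly_Suc[of x y 0])
  moreover have "qder_poly x y 1 = [:y:] + smult (q 1) (sol_poly x y 1)
      + pCons 0 (smult (- w 1) (sol_poly x y 1))"
    using qder_poly_Suc[of x y 0] by (simp add: mult_pCons_left)
  ultimately have "degree (sol_poly x y 1) \<le> 0" "coeff (sol_poly x y 1) 0 = x + y / f 0"
    "degree (qder_poly x y 1) \<le> Suc 0" "coeff (qder_poly x y 1) (Suc 0) = - (x + y / f 0) * w 1"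
    by (auto simp: degree_add_le algebra_simps)
  from degree_transfer_from[of 1 N, OF _ _ _ this] N2
  have "degree (sol_poly x y N) \<le> N - 1"
    "coeff (sol_poly x y N) (N - 1) = (x + y / f 0) * weight_prod 1"
    "degree (qder_poly x y N) \<le> N"
    and cB: "coeff (qder_poly x y N) N = - (x + y / f 0) * weight_prod 1 * w N"
    by (auto simp: weight_prod_def)
  moreover have "coeff (qder_poly x y N) N \<noteq> 0"
    using cB assms weight_prod_nonzero[of 1] wN by simp
  ultimately show "degree (sol_poly x y N) \<le> N - 1"
    "coeff (sol_poly x y N) (N - 1) = (x + y / f 0) * weight_prod 1"
    "degree (qder_poly x y N) = N"
    "coeff (qder_poly x y N) N = - (x + y / f 0) * weight_prod 1 * w N"
    by (auto intro: degree_eqI)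
qed

lemma degree_transfer_y1_zero:
  assumes "x + y / f 0 = 0"
  shows "degree (sol_poly x y N) \<le> N - 2"
    "coeff (sol_poly x y N) (N - 2) = (y / f 1) * weight_prod 2"
    "degree (qder_poly x y N) \<le> N - 1"
    "coeff (qder_poly x y N) (N - 1) = - (y / f 1) * weight_prod 2 * w N"
proof -
  have A1: "sol_poly x y 1 = 0"
    using assms by (simp add: sol_poly_Suc[of x y 0])
  then have B1: "qder_poly x y 1 = [:y:]"
    using qder_poly_Suc[of x y 0] by simp
  have A2: "sol_poly x y 2 = [:y / f 1:]"
    using sol_poly_Suc[of x y 1] A1 B1 by (simp add: numeral_2_eq_2)
  have "qder_poly x y 2 = [:y:] + smult (q 2) (sol_poly x y 2) + pCons 0 (smult (- w 2) (sol_poly x y 2))"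
    using qder_poly_Suc[of x y 1] B1 by (simp add: mult_pCons_left numeral_2_eq_2)
  with A2 have "degree (sol_poly x y 2) \<le> 0" "coeff (sol_poly x y 2) 0 = y / f 1"
    "degree (qder_poly x y 2) \<le> Suc 0" "coeff (qder_poly x y 2) (Suc 0) = - (y / f 1) * w 2"
    by (auto simp: degree_add_le)
  from degree_transfer_from[of 2 N, OF _ _ _ this] N2
  show "degree (sol_poly x y N) \<le> N - 2"
    "coeff (sol_poly x y N) (N - 2) = (y / f 1) * weight_prod 2"
    "degree (qder_poly x y N) \<le> N - 1"
    "coeff (qder_poly x y N) (N - 1) = - (y / f 1) * weight_prod 2 * w N"
    by (auto simp: weight_prod_def numeral_2_eq_2 Suc_diff_Suc)
qed


section \<open>Solutions, eigenvalues and multiplicities\<close>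

definition "sol_val z a b n =
  a * poly (cpoly (sol_poly 1 0 n)) z + b * poly (cpoly (sol_poly 0 1 n)) z"
definition "qder_val z a b n =
  a * poly (cpoly (qder_poly 1 0 n)) z + b * poly (cpoly (qder_poly 0 1 n)) z"
definition "sol_seq z a b = (\<lambda>n. if n \<le> Suc N then sol_val z a b n else 0)"

definition satisfies_bc :: "(nat \<Rightarrow> nat \<Rightarrow> complex) \<Rightarrow> complex \<Rightarrow> complex \<Rightarrow> complex \<Rightarrow> bool" where
  "satisfies_bc BC z a b \<longleftrightarrow>
     (\<forall>i<2. BC i 0 * a + BC i 1 * b + BC i 2 * sol_val z a b N + BC i 3 * qder_val z a b N = 0)"

lemma sol_val_0 [simp]: "sol_val z a b 0 = a"
  and qder_val_0 [simp]: "qder_val z a b 0 = b"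
  by (simp_all add: sol_val_def qder_val_def)

lemma sol_val_Suc: "sol_val z a b (Suc n) = sol_val z a b n + qder_val z a b n / of_real (f n)"
  unfolding sol_val_def qder_val_def sol_poly_Suc[of 1 0 n] sol_poly_Suc[of 0 1 n]
  by (simp add: algebra_simps divide_inverse)

lemma qder_val_Suc: "qder_val z a b (Suc n)
    = qder_val z a b n + (of_real (q (Suc n)) - z * of_real (w (Suc n))) * sol_val z a b (Suc n)"
  unfolding sol_val_def qder_val_def qder_poly_Suc[of 1 0 n] qder_poly_Suc[of 0 1 n]
  by (simp add: algebra_simps)

lemma sol_val_N: "sol_val z a b N = a * poly (cpoly m11) z + b * poly (cpoly m12) z"
  and qder_val_N: "qder_val z a b N = a * poly (cpoly m21) z + b * poly (cpoly m22) z"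
  by (simp_all add: sol_val_def qder_val_def m11_def m12_def m21_def m22_def)

lemma sol_seq_eq:
  assumes "n \<le> N"
  shows "sol_seq z a b n = sol_val z a b n" "of_real (f n) * fwd (sol_seq z a b) n = qder_val z a b n"
  using assms f_nonzero by (simp_all add: sol_seq_def fwd_def sol_val_Suc)

lemma solution_eq_sol_val:
  assumes eqn: "\<forall>n\<in>{1..N}. - (of_real (f n) * fwd y n - of_real (f (n - 1)) * fwd y (n - 1))
      + of_real (q n) * y n = z * of_real (w n) * y n"
    and "n \<le> N"
  shows "y n = sol_val z (y 0) (of_real (f 0) * fwd y 0) n
    \<and> of_real (f n) * fwd y n = qder_val z (y 0) (of_real (f 0) * fwd y 0) n"
  using \<open>n \<le> N\<close>
proof (induct n)
  case (Suc n)
  let ?a = "y 0" and ?b = "of_real (f 0) * fwd y 0"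
  have IH: "y n = sol_val z ?a ?b n" "of_real (f n) * fwd y n = qder_val z ?a ?b n"
    using Suc by auto
  have "y (Suc n) = y n + fwd y n"
    by (simp add: fwd_def)
  also have "fwd y n = qder_val z ?a ?b n / of_real (f n)"
    using IH(2) f_nonzero Suc.prems by (simp add: field_simps)
  finally have y: "y (Suc n) = sol_val z ?a ?b (Suc n)"
    using IH(1) by (simp add: sol_val_Suc)
  moreover have "- (of_real (f (Suc n)) * fwd y (Suc n) - of_real (f n) * fwd y n)
      + of_real (q (Suc n)) * y (Suc n) = z * of_real (w (Suc n)) * y (Suc n)"
    using eqn Suc.prems by (metis atLeastAtMost_iff diff_Suc_1 le_add1 plus_1_eq_Suc)
  ultimately show ?case
    using IH(2) by (simp add: qder_val_Suc algebra_simps)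
qed simp

lemma bvec_sol_seq:
  "bvec f N (sol_seq z a b) 0 = a" "bvec f N (sol_seq z a b) 1 = b"
  "bvec f N (sol_seq z a b) 2 = sol_val z a b N" "bvec f N (sol_seq z a b) 3 = qder_val z a b N"
  using sol_seq_eq[of 0 z a b] sol_seq_eq[of N z a b] by (auto simp: bvec_def)

lemma sum_lessThan_4: "(\<Sum>j<(4::nat). g j) = g 0 + g 1 + g 2 + (g 3 :: complex)"
  by (simp add: eval_nat_numeral lessThan_Suc add.assoc)

lemma sol_seq_solves:
  "\<forall>n\<in>{1..N}. - (of_real (f n) * fwd (sol_seq z a b) n - of_real (f (n - 1)) * fwd (sol_seq z a b) (n - 1))
      + of_real (q n) * sol_seq z a b n = z * of_real (w n) * sol_seq z a b n"
proof
  fix n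
  assume n: "n \<in> {1..N}"
  then obtain m where m: "n = Suc m" "m \<le> N"
    by (cases n) auto
  then show "- (of_real (f n) * fwd (sol_seq z a b) n - of_real (f (n - 1)) * fwd (sol_seq z a b) (n - 1))
      + of_real (q n) * sol_seq z a b n = z * of_real (w n) * sol_seq z a b n"
    using sol_seq_eq[of n z a b] sol_seq_eq[of m z a b] n by (simp add: qder_val_Suc algebra_simps)
qed

lemma sol_space_iff:
  "y \<in> sol_space N f q w BC z \<longleftrightarrow> (\<exists>a b. y = sol_seq z a b \<and> satisfies_bc BC z a b)"
proof
  assume y: "y \<in> sol_space N f q w BC z"
  define a b where "a = y 0" "b = of_real (f 0) * fwd y 0"
  have eqn: "\<forall>n\<in>{1..N}. - (of_real (f n) * fwd y n - of_real (f (n - 1)) * fwd y (n - 1))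
      + of_real (q n) * y n = z * of_real (w n) * y n"
    using y by (simp add: sol_space_def)
  note val = solution_eq_sol_val[OF eqn, folded a_b_def]
  have "y (Suc N) = y N + fwd y N"
    by (simp add: fwd_def)
  also have "\<dots> = sol_val z a b (Suc N)"
    using val[of N] f_nonzero by (simp add: sol_val_Suc field_simps)
  finally have "y = sol_seq z a b"
    using val y by (auto simp: sol_seq_def sol_space_def fun_eq_iff le_Suc_eq not_le)
  moreover from this have "satisfies_bc BC z a b"
    using y by (simp add: sol_space_def satisfies_bc_def bvec_sol_seq
        bvec_sol_seq(2)[unfolded One_nat_def] sum_lessThan_4)
  ultimately show "\<exists>a b. y = sol_seq z a b \<and> satisfies_bc BC z a b"
    by blast
next
  assume "\<exists>a b. y = sol_seq z a b \<and> satisfies_bc BC z a b"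
  moreover have "\<forall>n>Suc N. sol_seq z a b n = 0" for a b
    by (simp add: sol_seq_def)
  ultimately show "y \<in> sol_space N f q w BC z"
    using sol_seq_solves by (auto simp: sol_space_def satisfies_bc_def bvec_sol_seq
        bvec_sol_seq(2)[unfolded One_nat_def] sum_lessThan_4)
qed

lemma sol_seq_linear: "sol_seq z a b = (\<lambda>n. a * sol_seq z 1 0 n + b * sol_seq z 0 1 n)"
  by (auto simp: sol_seq_def sol_val_def fun_eq_iff)

lemma sol_seq_scale: "sol_seq z (t * a) (t * b) = (\<lambda>n. t * sol_seq z a b n)"
  by (auto simp: sol_seq_def sol_val_def fun_eq_iff algebra_simps)

lemma sol_seq_eq_0_iff: "sol_seq z a b = 0 \<longleftrightarrow> (a, b) = (0, 0)"
proof
  assume "sol_seq z a b = 0"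
  then have "sol_seq z a b 0 = 0" "sol_seq z a b 1 = 0"
    by simp_all
  moreover have "sol_val z a b 1 = a + b / of_real (f 0)"
    using sol_val_Suc[of z a b 0] by simp
  ultimately show "(a, b) = (0, 0)"
    using f0 by (simp add: sol_seq_def)
qed (simp add: sol_seq_def sol_val_def fun_eq_iff)

lemma is_eig_iff: "is_eig N f q w BC z \<longleftrightarrow> (\<exists>a b. (a, b) \<noteq> (0, 0) \<and> satisfies_bc BC z a b)"
proof -
  have "(\<exists>y. (\<exists>a b. y = sol_seq z a b \<and> satisfies_bc BC z a b) \<and> y \<noteq> 0)
      \<longleftrightarrow> (\<exists>a b. sol_seq z a b \<noteq> 0 \<and> satisfies_bc BC z a b)"
    by blast
  then show ?thesis
    unfolding is_eig_def Bex_def sol_space_iff sol_seq_eq_0_iff .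
qed

lemma eig_mult_line:
  assumes "sol_space N f q w BC z = {y. \<exists>t. y = sol_seq z (t * a) (t * b)}" "(a, b) \<noteq> (0, 0)"
  shows "eig_mult N f q w BC z = 1"
proof -
  have "sol_space N f q w BC z = range (\<lambda>t n. t * sol_seq z a b n)"
    using assms(1) by (auto simp: sol_seq_scale)
  then show ?thesis
    using dim_line[of "sol_seq z a b"] assms(2) sol_seq_eq_0_iff by (simp add: eig_mult_def)
qed

lemma eig_mult_plane:
  assumes "sol_space N f q w BC z = {y. \<exists>a b. y = sol_seq z a b}"
  shows "eig_mult N f q w BC z = 2"
proof -
  have "sol_space N f q w BC z = {y. \<exists>a b. y = (\<lambda>n. a * sol_seq z 1 0 n + b * sol_seq z 0 1 n)}"
    using assms by (subst (asm) sol_seq_linear) simp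
  moreover have "sol_seq z 1 0 \<noteq> (\<lambda>n. k * sol_seq z 0 1 n)" for k
  proof
    assume "sol_seq z 1 0 = (\<lambda>n. k * sol_seq z 0 1 n)"
    then have "sol_seq z 1 0 0 = k * sol_seq z 0 1 0"
      by metis
    then show False
      by (simp add: sol_seq_def)
  qed
  ultimately show ?thesis
    using dim_plane[of "sol_seq z 0 1" "sol_seq z 1 0"] sol_seq_eq_0_iff[of z 0 1]
    by (simp add: eig_mult_def)
qed

lemma lagrange_identity:
  "sol_val z a b n * qder_val m c d n - qder_val z a b n * sol_val m c d n - (a * d - b * c)
   = (z - m) * (\<Sum>k\<in>{1..n}. of_real (w k) * sol_val z a b k * sol_val m c d k)"
proof (induct n)
  case (Suc n)
  define A A' where "A = sol_val z a b (Suc n)" "A' = sol_val m c d (Suc n)"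
  have "A * qder_val m c d n - qder_val z a b n * A'
      = sol_val z a b n * qder_val m c d n - qder_val z a b n * sol_val m c d n"
    by (simp add: A_A'_def sol_val_Suc algebra_simps)
  then have "sol_val z a b (Suc n) * qder_val m c d (Suc n) - qder_val z a b (Suc n) * sol_val m c d (Suc n)
      - (a * d - b * c)
      = (sol_val z a b n * qder_val m c d n - qder_val z a b n * sol_val m c d n - (a * d - b * c))
        + (z - m) * of_real (w (Suc n)) * A * A'"
    unfolding qder_val_Suc A_A'_def[symmetric] by (simp add: algebra_simps)
  also have "\<dots> = (z - m) * (\<Sum>k\<in>{1..Suc n}. of_real (w k) * sol_val z a b k * sol_val m c d k)"
    using Suc by (simp add: sum.cl_ivl_Suc A_A'_def algebra_simps)
  finally show ?case .
qed simp

lemma cnj_sol_val: "cnj (sol_val z a b n) = sol_val (cnj z) (cnj a) (cnj b) n"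
  and cnj_qder_val: "cnj (qder_val z a b n) = qder_val (cnj z) (cnj a) (cnj b) n"
  by (simp_all add: sol_val_def qder_val_def cnj_poly_cpoly)

lemma sol_val_1_or_2_nonzero:
  assumes "(a, b) \<noteq> (0, 0)"
  shows "sol_val z a b 1 \<noteq> 0 \<or> sol_val z a b 2 \<noteq> 0"
proof -
  have "sol_val z a b 1 = a + b / of_real (f 0)"
    using sol_val_Suc[of z a b 0] by simp
  moreover have "sol_val z a b 2 = sol_val z a b 1 + qder_val z a b 1 / of_real (f 1)"
    using sol_val_Suc[of z a b 1] by (simp add: numeral_2_eq_2)
  moreover have "qder_val z a b 1 = b + (of_real (q 1) - z * of_real (w 1)) * sol_val z a b 1"
    using qder_val_Suc[of z a b 0] by simp
  ultimately show ?thesis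
    using assms f0 f1 by (cases "sol_val z a b 1 = 0") auto
qed

text \<open>Self-adjointness: if the boundary values \<open>(u, v)\<close> of a nontrivial solution conserve the
  form \<open>u cnj v - v cnj u\<close>, Lagrange's identity with the conjugate solution forces \<open>z\<close> to be
  real.\<close>

lemma real_if_boundary_form_conserved:
  assumes ab: "(a, b) \<noteq> (0, 0)"
    and conserved: "sol_val z a b N * cnj (qder_val z a b N) - qder_val z a b N * cnj (sol_val z a b N)
      = a * cnj b - b * cnj a"
  shows "z \<in> \<real>"
proof -
  define S where "S = (\<Sum>k\<in>{1..N}. w k * (cmod (sol_val z a b k))\<^sup>2)"
  obtain k where k: "k \<in> {1..N}" "sol_val z a b k \<noteq> 0"
    using sol_val_1_or_2_nonzero[OF ab, of z] N2
    by (metis atLeastAtMost_iff le_numeral_extra(4) one_le_numeral order.trans)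
  have "0 < w k * (cmod (sol_val z a b k))\<^sup>2"
    using k w_pos by simp
  also have "\<dots> \<le> S"
    unfolding S_def using k w_pos by (intro member_le_sum) (auto simp: order.strict_implies_order)
  finally have "S \<noteq> 0"
    by simp
  have "(z - cnj z) * (\<Sum>k\<in>{1..N}. of_real (w k) * sol_val z a b k * cnj (sol_val z a b k)) = 0"
    using lagrange_identity[of z a b N "cnj z" "cnj a" "cnj b"] conserved
    by (simp add: cnj_sol_val cnj_qder_val)
  moreover have "of_real (w k) * sol_val z a b k * cnj (sol_val z a b k)
      = of_real (w k * (cmod (sol_val z a b k))\<^sup>2)" for k
    by (metis complex_norm_square mult.assoc of_real_mult)
  ultimately have "(z - cnj z) * of_real S = 0"
    by (simp add: S_def)
  with \<open>S \<noteq> 0\<close> show ?thesis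
    by (simp add: Reals_cnj_iff)
qed

lemma eigenvalues_by_char_poly:
  fixes R :: "real poly"
  assumes R: "R \<noteq> 0" and eig: "\<And>z. is_eig N f q w BC z \<longleftrightarrow> poly (cpoly R) z = 0"
    and mult: "\<And>x. poly R x = 0 \<Longrightarrow> eig_mult N f q w BC (of_real x) = order x R"
    and real: "\<And>z. poly (cpoly R) z = 0 \<Longrightarrow> z \<in> \<real>"
  shows "num_eigs_eq N f q w BC (degree R)"
    "size (filter_mset (\<lambda>x. x \<le> t) (mset (eig_list N f q w BC))) = root_count R t"
    "length (eig_list N f q w BC) = degree R"
proof -
  have fin: "finite {x. poly R x = 0}"
    by (rule poly_roots_finite[OF R])
  have eig_set: "eig_set N f q w BC = of_real ` {x. poly R x = 0}"
  proof safe
    fix z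
    assume "z \<in> eig_set N f q w BC"
    then have "poly (cpoly R) z = 0"
      using eig by (simp add: eig_set_def)
    moreover from this obtain x where "z = of_real x"
      using real Reals_cases by blast
    ultimately show "z \<in> of_real ` {x. poly R x = 0}"
      by auto
  qed (simp add: eig_set_def eig)
  have "(\<Sum>lam\<in>eig_set N f q w BC. eig_mult N f q w BC lam) = (\<Sum>x | poly R x = 0. order x R)"
    unfolding eig_set by (subst sum.reindex) (auto simp: inj_on_def mult)
  also have "\<dots> = degree R"
    by (rule sum_order_real_roots[OF R real])
  finally show "num_eigs_eq N f q w BC (degree R)"
    unfolding num_eigs_eq_def eig_set using fin by simp
  have "{x::real. is_eig N f q w BC (of_real x)} = {x. poly R x = 0}"
    using eig by simp
  then have list: "mset (eig_list N f q w BC) = (\<Sum>x | poly R x = 0. replicate_mset (order x R) x)"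
    by (simp add: eig_list_def mult)
  have "{x. x \<in> {x. poly R x = 0} \<and> x \<le> t} = {x. poly R x = 0 \<and> x \<le> t}"
    by auto
  then show "size (filter_mset (\<lambda>x. x \<le> t) (mset (eig_list N f q w BC))) = root_count R t"
    by (simp only: list size_filter_sum_replicate_mset[OF fin] root_count_def)
  have "length (eig_list N f q w BC) = (\<Sum>x | poly R x = 0. order x R)"
    by (simp only: list size_mset[symmetric] size_multiset_sum size_replicate_mset)
  also have "\<dots> = degree R"
    by (rule sum_order_real_roots[OF R real])
  finally show "length (eig_list N f q w BC) = degree R" .
qed

lemma eigv_interlace:
  assumes count: "\<And>t. size (filter_mset (\<lambda>x. x \<le> t) (mset (eig_list N f q w B1)))
      \<le> size (filter_mset (\<lambda>x. x \<le> t) (mset (eig_list N f q w B2))) + j"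
    and "n + j < length (eig_list N f q w B1)"
  shows "eigv N f q w B2 n \<le> eigv N f q w B1 (n + j)"
proof -
  have "sorted_list_of_multiset (mset (eig_list N f q w B)) = eig_list N f q w B" for B
    by (simp add: eig_list_def)
  then show ?thesis
    using sorted_list_of_multiset_interlace[OF count, of n] assms(2) by (simp add: eigv_def)
qed

lemma eigv_interlace_by_root_counts:
  assumes count1: "\<And>t. size (filter_mset (\<lambda>x. x \<le> t) (mset (eig_list N f q w B1))) = root_count R1 t"
    and count2: "\<And>t. size (filter_mset (\<lambda>x. x \<le> t) (mset (eig_list N f q w B2))) = root_count R2 t"
    and diff: "\<And>t. int (root_count R1 t) - int (root_count R2 t) \<in> {0, 1}"
  shows "n < length (eig_list N f q w B2) \<Longrightarrow> eigv N f q w B1 n \<le> eigv N f q w B2 n"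
    "n + 1 < length (eig_list N f q w B1) \<Longrightarrow> eigv N f q w B2 n \<le> eigv N f q w B1 (n + 1)"
proof -
  have "root_count R2 t \<le> root_count R1 t + 0" "root_count R1 t \<le> root_count R2 t + 1" for t
    using diff[of t] by auto
  then show "n < length (eig_list N f q w B2) \<Longrightarrow> eigv N f q w B1 n \<le> eigv N f q w B2 n"
    "n + 1 < length (eig_list N f q w B1) \<Longrightarrow> eigv N f q w B2 n \<le> eigv N f q w B1 (n + 1)"
    using eigv_interlace[of B2 B1 0 n] eigv_interlace[of B1 B2 1 n] count1 count2 by simp_all
qed

end


section \<open>The three boundary conditions\<close>

text \<open>With \<open>M = (m11 m12; m21 m22)\<close> the transfer matrix from \<open>(y\<^sub>0, f\<^sub>0 \<Delta>y\<^sub>0)\<close> to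
  \<open>(y\<^sub>N, f\<^sub>N \<Delta>y\<^sub>N)\<close>, the condition \<open>[e^{i\<gamma>}K | -I]\<close> reads \<open>K\<^sup>-\<^sup>1 M v = e^{i\<gamma>} v\<close>.
  \<open>(pT qT; rT sT) = K\<^sup>-\<^sup>1 M\<close>, whose entry \<open>rT\<close> is the characteristic polynomial of \<open>T\<^sub>K\<close>;
  \<open>(pU qU; rU sU) = (K M\<^sup>-\<^sup>1)\<^sup>T\<close> has the same trace, and \<open>rU\<close> is that of \<open>U\<^sub>K\<close>.\<close>

locale sl_problem = sl_equation +
  fixes k11 k12 k21 k22 \<gamma> :: real
  assumes SL: "k11 * k22 - k12 * k21 = 1"
begin

definition "c0 = 2 * cos \<gamma>"
definition "pT = smult k22 m11 - smult k12 m21"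
definition "qT = smult k22 m12 - smult k12 m22"
definition "rT = smult (-k21) m11 + smult k11 m21"
definition "sT = smult (-k21) m12 + smult k11 m22"
definition "pU = smult (-k12) m21 + smult k11 m22"
definition "qU = smult (-k22) m21 + smult k21 m22"
definition "rU = smult k12 m11 + smult (-k11) m12"
definition "sU = smult k22 m11 + smult (-k21) m12"
definition "char_E = pT + sT - [:c0:]"
definition "cK = k11 - f 0 * k12"

abbreviation "bcE \<equiv> BC_K \<gamma> k11 k12 k21 k22"
abbreviation "bcT \<equiv> BC_T k11 k12 k21 k22"
abbreviation "bcU \<equiv> BC_U k11 k12 k21 k22"

lemma c0_bound: "\<bar>c0\<bar> \<le> 2"
  using abs_cos_le_one[of \<gamma>] by (simp add: c0_def abs_mult)

lemma char_E_U: "pU + sU - [:c0:] = char_E"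
  unfolding char_E_def pU_def sU_def pT_def sT_def by (intro poly_ext) (simp add: algebra_simps)

lemma char_E_transfer: "char_E = sol_poly k22 (-k21) N + qder_poly (-k12) k11 N - [:c0:]"
  unfolding char_E_def pT_def sT_def sol_poly_N qder_poly_N by (intro poly_ext) (simp add: algebra_simps)

lemma rU_transfer: "rU = sol_poly k12 (-k11) N"
  unfolding rU_def sol_poly_N by simp

lemma rT_transfer: "rT = smult (-k21) (sol_poly 1 0 N) + smult k11 (qder_poly 1 0 N)"
  unfolding rT_def m11_def m21_def ..

lemma monotone_transfer_T: "monotone_transfer pT qT rT sT c0"
proof
  have "pT * sT - qT * rT = smult (k11 * k22 - k12 * k21) (m11 * m22 - m12 * m21)"
    unfolding pT_def qT_def rT_def sT_def by (intro poly_ext) (simp add: algebra_simps)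
  then show "pT * sT - qT * rT = 1"
    using SL det_m by simp
next
  fix t a b :: real
  assume ab: "(a, b) \<noteq> (0, 0)"
  have p: "smult a pT + smult b qT = smult k22 (sol_poly a b N) + smult (- k12) (qder_poly a b N)"
    and r: "smult a rT + smult b sT = smult (- k21) (sol_poly a b N) + smult k11 (qder_poly a b N)"
    unfolding pT_def qT_def rT_def sT_def sol_poly_N qder_poly_N
    by (intro poly_ext; simp add: algebra_simps)+
  show "poly (wronskian (smult a rT + smult b sT) (smult a pT + smult b qT)) t > 0"
    unfolding p r wronskian_lincomb using wronskian_transfer_pos[OF ab, of t] SL
    by (simp add: algebra_simps)
qed (rule c0_bound)

lemma monotone_transfer_U: "monotone_transfer pU qU rU sU c0"
proof
  have "pU * sU - qU * rU = smult (k11 * k22 - k12 * k21) (m11 * m22 - m12 * m21)"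
    unfolding pU_def qU_def rU_def sU_def by (intro poly_ext) (simp add: algebra_simps)
  then show "pU * sU - qU * rU = 1"
    using SL det_m by simp
next
  fix t a b :: real
  assume ab: "(a, b) \<noteq> (0, 0)"
  define e1 e2 where "e1 = - a * k12 - b * k22" "e2 = a * k11 + b * k21"
  have "a = k22 * e2 + k21 * e1" "b = - k12 * e2 - k11 * e1"
    using SL by (simp_all add: e1_e2_def algebra_simps)
  then have "(e1, e2) \<noteq> (0, 0)"
    using ab by auto
  moreover have "smult a pU + smult b qU = smult 0 (sol_poly e1 e2 N) + smult 1 (qder_poly e1 e2 N)"
    "smult a rU + smult b sU = smult (- 1) (sol_poly e1 e2 N) + smult 0 (qder_poly e1 e2 N)"
    unfolding pU_def qU_def rU_def sU_def sol_poly_N qder_poly_N e1_e2_def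
    by (intro poly_ext; simp add: algebra_simps)+
  ultimately show "poly (wronskian (smult a rU + smult b sU) (smult a pU + smult b qU)) t > 0"
    using wronskian_transfer_pos by (simp only: wronskian_lincomb) simp
qed (rule c0_bound)

lemma k12_nonzero_if_cK_zero: "cK = 0 \<Longrightarrow> k12 \<noteq> 0"
  and k11_nonzero_if_cK_zero: "cK = 0 \<Longrightarrow> k11 \<noteq> 0"
  using SL f0 by (auto simp: cK_def)

lemma degree_rT:
  assumes "k11 \<noteq> 0"
  shows "degree rT = N" "lead_coeff rT = - k11 * weight_prod 1 * w N"
proof -
  note c = degree_transfer_y1_nonzero[of 1 0]
  have "coeff (sol_poly 1 0 N) N = 0"
    using c(1) N2 by (intro coeff_eq_0) auto
  then have cN: "coeff rT N = - k11 * weight_prod 1 * w N"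
    using c(4) by (simp add: rT_transfer)
  have "degree rT \<le> N"
    unfolding rT_transfer using c(1,3) N2
    by (intro degree_add_le) (auto intro: le_trans[OF degree_smult_le])
  moreover have "coeff rT N \<noteq> 0"
    using cN assms weight_prod_nonzero[of 1] wN by simp
  ultimately show "degree rT = N"
    by (rule degree_eqI)
  with cN show "lead_coeff rT = - k11 * weight_prod 1 * w N"
    by simp
qed

lemma degree_rT_k11_zero:
  assumes "k11 = 0"
  shows "degree rT = N - 1"
proof -
  note c = degree_transfer_y1_nonzero[of 1 0]
  have r: "rT = smult (-k21) (sol_poly 1 0 N)"
    unfolding rT_transfer using assms by simp
  have "k21 \<noteq> 0"
    using SL assms by auto
  then show ?thesis
    using c(1,2) weight_prod_nonzero[of 1] unfolding r
    by (intro degree_eqI) (auto intro: le_trans[OF degree_smult_le])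
qed

lemma degree_char_E:
  assumes "cK \<noteq> 0"
  shows "degree char_E = N" "lead_coeff char_E = - (cK / f 0) * weight_prod 1 * w N"
proof -
  have "-k12 + k11 / f 0 = cK / f 0"
    using f0 by (simp add: cK_def field_simps)
  note c = degree_transfer_y1_nonzero[of "-k12" k11, unfolded this]
  have cf: "cK / f 0 \<noteq> 0"
    using assms f0 by simp
  have dA: "degree (sol_poly k22 (-k21) N) \<le> N - 1"
    using degree_transfer_y1_zero(1)[of k22 "-k21"] degree_transfer_y1_nonzero(1)[of k22 "-k21"]
    by (cases "k22 + - k21 / f 0 = 0") auto
  then have "coeff (sol_poly k22 (-k21) N) N = 0"
    using N2 by (intro coeff_eq_0) auto
  then have cN: "coeff char_E N = - (cK / f 0) * weight_prod 1 * w N"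
    using c(4)[OF cf] N2 by (simp add: char_E_transfer coeff_pCons')
  have "degree char_E \<le> N"
    unfolding char_E_transfer using dA c(3)[OF cf] N2
    by (intro degree_diff_le degree_add_le) auto
  moreover have "coeff char_E N \<noteq> 0"
    using cN cf weight_prod_nonzero[of 1] wN by simp
  ultimately show "degree char_E = N"
    by (rule degree_eqI)
  with cN show "lead_coeff char_E = - (cK / f 0) * weight_prod 1 * w N"
    by simp
qed

lemma degree_char_E_cK_zero:
  assumes "cK = 0"
  shows "degree char_E = N - 1"
proof -
  have k12: "k12 \<noteq> 0" and k11: "k11 = f 0 * k12"
    using k12_nonzero_if_cK_zero assms by (auto simp: cK_def)
  have "-k12 + k11 / f 0 = 0"
    using f0 k11 by simp
  note cB = degree_transfer_y1_zero[OF this]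
  have "k12 * (f 0 * k22 - k21) = 1"
    using SL k11 by (simp add: algebra_simps)
  then have "f 0 * k22 - k21 = 1 / k12"
    using k12 by (simp add: field_simps)
  moreover have "k22 + - k21 / f 0 = (f 0 * k22 - k21) / f 0"
    using f0 by (simp add: field_simps)
  ultimately have y1: "k22 + - k21 / f 0 = 1 / (f 0 * k12)"
    by simp
  then have "k22 + - k21 / f 0 \<noteq> 0"
    using f0 k12 by simp
  note cA = degree_transfer_y1_nonzero[OF this]
  have "coeff char_E (N - 1) = (1 / (f 0 * k12)) * weight_prod 1 - (k11 / f 1) * weight_prod 2 * w N"
    using cA(2) cB(4) N2 y1 by (simp add: char_E_transfer coeff_pCons')
  also have "\<dots> = - (weight_prod 2 / (f 1 * f 0 * k12)) * (w 1 + (f 0 * k12)\<^sup>2 * w N)"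
    using f0 f1 k12 unfolding weight_prod_1 k11 by (simp add: field_simps power2_eq_square)
  finally have "coeff char_E (N - 1) \<noteq> 0"
    using weight_prod_nonzero[of 2] f0 f1 k12 w1 wN
    by (simp add: add_pos_nonneg[THEN order.strict_implies_not_eq, THEN not_sym])
  moreover have "degree char_E \<le> N - 1"
    unfolding char_E_transfer using cA(1) cB(3) N2 by (intro degree_diff_le degree_add_le) auto
  ultimately show ?thesis
    by (intro degree_eqI)
qed

lemma degree_rU:
  assumes "cK \<noteq> 0"
  shows "degree rU = N - 1"
proof -
  have y1: "k12 + - k11 / f 0 = - (cK / f 0)"
    using f0 by (simp add: cK_def field_simps)
  then have "k12 + - k11 / f 0 \<noteq> 0"
    using assms f0 by simp
  then show ?thesis
    using degree_transfer_y1_nonzero(1,2)[of k12 "-k11"] weight_prod_nonzero[of 1]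
    unfolding rU_transfer by (intro degree_eqI) auto
qed

lemma coeff_rU_cK_zero:
  assumes "cK = 0"
  shows "degree rU \<le> N - 2" "coeff rU (N - 2) \<noteq> 0"
proof -
  have "k12 + - k11 / f 0 = 0"
    using f0 assms by (simp add: cK_def field_simps)
  then show "degree rU \<le> N - 2" "coeff rU (N - 2) \<noteq> 0"
    using degree_transfer_y1_zero(1,2)[of k12 "-k11"] k11_nonzero_if_cK_zero[OF assms] f1
      weight_prod_nonzero[of 2]
    unfolding rU_transfer by auto
qed

lemma degree_rU_cK_zero: "cK = 0 \<Longrightarrow> degree rU = N - 2"
  using coeff_rU_cK_zero by (intro degree_eqI)

lemma char_E_nonzero: "char_E \<noteq> 0"
proof
  assume "char_E = 0"
  then show False
    using degree_char_E degree_char_E_cK_zero N2 by (cases "cK = 0") auto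
qed

lemma rT_nonzero: "rT \<noteq> 0"
proof
  assume "rT = 0"
  then show False
    using degree_rT degree_rT_k11_zero N2 by (cases "k11 = 0") auto
qed

lemma rU_nonzero: "rU \<noteq> 0"
proof
  assume "rU = 0"
  then show False
    using degree_rU coeff_rU_cK_zero N2 by (cases "cK = 0") auto
qed

lemma all_less_2: "(\<forall>i<(2::nat). P i) \<longleftrightarrow> P 0 \<and> P 1"
  by (auto simp: less_2_cases_iff)

lemma SL_complex: "of_real k11 * of_real k22 - of_real k12 * of_real k21 = (1::complex)"
  using SL by (metis of_real_1 of_real_diff of_real_mult)

lemma satisfies_bc_T:
  "satisfies_bc (bcT) z a b \<longleftrightarrow> b = 0 \<and> a * poly (cpoly rT) z = 0"
  by (auto simp: satisfies_bc_def all_less_2 BC_T_def sol_val_N qder_val_N rT_def algebra_simps)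

lemma is_eig_T: "is_eig N f q w (bcT) z \<longleftrightarrow> poly (cpoly rT) z = 0"
  unfolding is_eig_iff satisfies_bc_T by auto

lemma eig_mult_T:
  assumes "poly (cpoly rT) z = 0"
  shows "eig_mult N f q w (bcT) z = 1"
proof (rule eig_mult_line[of _ _ 1 0])
  show "sol_space N f q w (bcT) z = {y. \<exists>t. y = sol_seq z (t * 1) (t * 0)}"
    using assms by (auto simp: sol_space_iff satisfies_bc_T)
qed simp

lemma satisfies_bc_U:
  "satisfies_bc (bcU) z a b \<longleftrightarrow>
     (\<exists>t. a = t * - of_real k12 \<and> b = t * of_real k11 \<and> t * poly (cpoly rU) z = 0)"
proof -
  have "(complex_of_real k11, complex_of_real k12) \<noteq> (0, 0)"
    using SL by auto
  moreover have "sol_val z (t * - of_real k12) (t * of_real k11) N = - (t * poly (cpoly rU) z)" for t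
    by (simp add: sol_val_N rU_def algebra_simps)
  ultimately show ?thesis
    unfolding satisfies_bc_def all_less_2 by (auto simp: BC_U_def kernel_row sol_val_N)
qed

lemma is_eig_U: "is_eig N f q w (bcU) z \<longleftrightarrow> poly (cpoly rU) z = 0"
proof -
  have "(- of_real k12, of_real k11) \<noteq> (0::complex, 0::complex)"
    using SL by auto
  then have "\<exists>a b. (a, b) \<noteq> (0, 0) \<and>
      (\<exists>t. a = t * - of_real k12 \<and> b = t * of_real k11 \<and> t * poly (cpoly rU) z = 0)"
    if "poly (cpoly rU) z = 0"
    using that by (intro exI[of _ "- of_real k12"] exI[of _ "of_real k11"]) auto
  then show ?thesis
    unfolding is_eig_iff satisfies_bc_U by auto
qed

lemma eig_mult_U:
  assumes "poly (cpoly rU) z = 0"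
  shows "eig_mult N f q w (bcU) z = 1"
proof (rule eig_mult_line[of _ _ "- of_real k12" "of_real k11"])
  show "sol_space N f q w (bcU) z
      = {y. \<exists>t. y = sol_seq z (t * - of_real k12) (t * of_real k11)}"
    using assms by (auto simp: sol_space_iff satisfies_bc_U) blast
  show "(- complex_of_real k12, complex_of_real k11) \<noteq> (0, 0)"
    using SL by auto
qed

lemma transfer_eq_K_mult:
  "m11 = smult k11 pT + smult k12 rT" "m12 = smult k11 qT + smult k12 sT"
  "m21 = smult k21 pT + smult k22 rT" "m22 = smult k21 qT + smult k22 sT"
proof -
  have "smult k11 pT + smult k12 rT = smult (k11 * k22 - k12 * k21) m11"
    "smult k11 qT + smult k12 sT = smult (k11 * k22 - k12 * k21) m12"
    "smult k21 pT + smult k22 rT = smult (k11 * k22 - k12 * k21) m21"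
    "smult k21 qT + smult k22 sT = smult (k11 * k22 - k12 * k21) m22"
    unfolding pT_def qT_def rT_def sT_def by (intro poly_ext; simp add: algebra_simps)+
  then show "m11 = smult k11 pT + smult k12 rT" "m12 = smult k11 qT + smult k12 sT"
    "m21 = smult k21 pT + smult k22 rT" "m22 = smult k21 qT + smult k22 sT"
    using SL by simp_all
qed

lemma satisfies_bc_E:
  "satisfies_bc (bcE) z a b \<longleftrightarrow>
     (poly (cpoly pT) z - cis \<gamma>) * a + poly (cpoly qT) z * b = 0 \<and>
     poly (cpoly rT) z * a + (poly (cpoly sT) z - cis \<gamma>) * b = 0"
proof -
  define u v where "u = cis \<gamma> * a - (poly (cpoly pT) z * a + poly (cpoly qT) z * b)"
    "v = cis \<gamma> * b - (poly (cpoly rT) z * a + poly (cpoly sT) z * b)"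
  have "satisfies_bc (bcE) z a b \<longleftrightarrow>
      of_real k11 * u + of_real k12 * v = 0 \<and> of_real k21 * u + of_real k22 * v = 0"
    by (simp add: satisfies_bc_def all_less_2 BC_K_def sol_val_N qder_val_N transfer_eq_K_mult u_v_def
        algebra_simps)
  also have "\<dots> \<longleftrightarrow> u = 0 \<and> v = 0"
  proof safe
    assume h: "of_real k11 * u + of_real k12 * v = 0" "of_real k21 * u + of_real k22 * v = 0"
    have "x = of_real k22 * (of_real k11 * x + of_real k12 * y) - of_real k12 * (of_real k21 * x + of_real k22 * y)
      \<and> y = of_real k11 * (of_real k21 * x + of_real k22 * y) - of_real k21 * (of_real k11 * x + of_real k12 * y)"
      for x y :: complex
      using SL_complex by (simp add: algebra_simps)
    note this[of u v]
    with h show "u = 0" "v = 0"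
      by simp_all
  qed simp_all
  finally show ?thesis
    by (auto simp: u_v_def algebra_simps)
qed

lemma det_E:
  "(poly (cpoly pT) z - cis \<gamma>) * (poly (cpoly sT) z - cis \<gamma>) - poly (cpoly qT) z * poly (cpoly rT) z
     = - cis \<gamma> * poly (cpoly char_E) z"
proof -
  interpret T: monotone_transfer pT qT rT sT c0
    by (rule monotone_transfer_T)
  have "poly (cpoly pT) z * poly (cpoly sT) z - poly (cpoly qT) z * poly (cpoly rT) z = 1"
    using arg_cong[OF T.det, of "\<lambda>P. poly (cpoly P) z"] by simp
  moreover have "cis \<gamma> * cis \<gamma> + 1 = cis \<gamma> * of_real c0"
    by (simp add: c0_def complex_eq_iff power2_eq_square algebra_simps)
  ultimately show ?thesis
    by (simp add: char_E_def algebra_simps)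
qed

lemma is_eig_E: "is_eig N f q w (bcE) z \<longleftrightarrow> poly (cpoly char_E) z = 0"
proof
  assume "is_eig N f q w (bcE) z"
  then obtain a b where "(a, b) \<noteq> (0, 0)"
    "(poly (cpoly pT) z - cis \<gamma>) * a + poly (cpoly qT) z * b = 0"
    "poly (cpoly rT) z * a + (poly (cpoly sT) z - cis \<gamma>) * b = 0"
    unfolding is_eig_iff satisfies_bc_E by blast
  then have "- cis \<gamma> * poly (cpoly char_E) z = 0"
    using det_zero_if_kernel det_E[of z] by metis
  then show "poly (cpoly char_E) z = 0"
    by simp
next
  assume "poly (cpoly char_E) z = 0"
  then obtain a b where "(a, b) \<noteq> (0, 0)"
    "(poly (cpoly pT) z - cis \<gamma>) * a + poly (cpoly qT) z * b = 0"
    "poly (cpoly rT) z * a + (poly (cpoly sT) z - cis \<gamma>) * b = 0"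
    using kernel_nontrivial_if_det_zero det_E[of z] by (metis mult_zero_right)
  then show "is_eig N f q w (bcE) z"
    unfolding is_eig_iff satisfies_bc_E by blast
qed

lemma eig_mult_E:
  assumes "poly (cpoly char_E) z = 0"
  shows "eig_mult N f q w (bcE) z =
    (if poly (cpoly pT) z = cis \<gamma> \<and> poly (cpoly sT) z = cis \<gamma> \<and> poly (cpoly qT) z = 0
        \<and> poly (cpoly rT) z = 0 then 2 else 1)"
proof (cases "poly (cpoly pT) z = cis \<gamma> \<and> poly (cpoly sT) z = cis \<gamma> \<and> poly (cpoly qT) z = 0
    \<and> poly (cpoly rT) z = 0")
  case True
  then have "sol_space N f q w (bcE) z = {y. \<exists>a b. y = sol_seq z a b}"
    by (auto simp: sol_space_iff satisfies_bc_E) blast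
  with True show ?thesis
    by (simp add: eig_mult_plane)
next
  case False
  have "(poly (cpoly pT) z - cis \<gamma>) * (poly (cpoly sT) z - cis \<gamma>) - poly (cpoly qT) z * poly (cpoly rT) z = 0"
    using det_E[of z] assms by simp
  moreover have "\<not> (poly (cpoly pT) z - cis \<gamma> = 0 \<and> poly (cpoly qT) z = 0 \<and> poly (cpoly rT) z = 0
      \<and> poly (cpoly sT) z - cis \<gamma> = 0)"
    using False by auto
  ultimately obtain v1 v2 where v: "(v1, v2) \<noteq> (0, 0)"
    "\<And>a b. satisfies_bc (bcE) z a b \<longleftrightarrow> (\<exists>t. a = t * v1 \<and> b = t * v2)"
    unfolding satisfies_bc_E by (rule kernel_singular_2x2) blast
  then have "sol_space N f q w (bcE) z = {y. \<exists>t. y = sol_seq z (t * v1) (t * v2)}"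
    by (auto simp: sol_space_iff) blast+
  with False show ?thesis
    using eig_mult_line[OF _ v(1)] by simp
qed

lemma char_E_real_roots:
  assumes "poly (cpoly char_E) z = 0"
  shows "z \<in> \<real>"
proof -
  obtain a b where ab: "(a, b) \<noteq> (0, 0)" "satisfies_bc (bcE) z a b"
    using assms is_eig_E unfolding is_eig_iff by blast
  then have "sol_val z a b N = cis \<gamma> * (of_real k11 * a + of_real k12 * b)"
    "qder_val z a b N = cis \<gamma> * (of_real k21 * a + of_real k22 * b)"
    by (auto simp: satisfies_bc_def all_less_2 BC_K_def algebra_simps)
  then have "sol_val z a b N * cnj (qder_val z a b N) - qder_val z a b N * cnj (sol_val z a b N)
      = (cis \<gamma> * cnj (cis \<gamma>)) * (of_real k11 * of_real k22 - of_real k12 * of_real k21)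
        * (a * cnj b - b * cnj a)"
    by (simp add: algebra_simps)
  also have "\<dots> = a * cnj b - b * cnj a"
    using SL_complex by (simp add: cis_cnj cis_mult)
  finally show ?thesis
    by (rule real_if_boundary_form_conserved[OF ab(1)])
qed

lemma rT_real_roots:
  assumes "poly (cpoly rT) z = 0"
  shows "z \<in> \<real>"
proof -
  have "(-k21, k11) \<noteq> (0, 0)"
    using SL by auto
  moreover have "of_real (-k21) * sol_val z 1 0 N + of_real k11 * qder_val z 1 0 N = 0"
    using assms by (simp add: rT_def sol_val_N qder_val_N)
  ultimately have "sol_val z 1 0 N * cnj (qder_val z 1 0 N) - qder_val z 1 0 N * cnj (sol_val z 1 0 N) = 0"
    by (rule real_dependent_imp_form_zero)
  then show ?thesis
    by (intro real_if_boundary_form_conserved[of 1 0]) auto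
qed

lemma rU_real_roots:
  assumes "poly (cpoly rU) z = 0"
  shows "z \<in> \<real>"
proof -
  have "sol_val z k12 (- k11) N = 0"
    using assms by (simp add: rU_def sol_val_N)
  moreover have "(complex_of_real k12, complex_of_real (- k11)) \<noteq> (0, 0)"
    using SL by auto
  ultimately show ?thesis
    by (intro real_if_boundary_form_conserved[of "of_real k12" "- of_real k11"]) simp_all
qed

interpretation T: real_rooted_transfer pT qT rT sT c0
proof -
  interpret monotone_transfer pT qT rT sT c0
    by (rule monotone_transfer_T)
  show "real_rooted_transfer pT qT rT sT c0"
    using char_E_nonzero rT_nonzero char_E_real_roots rT_real_roots
    by unfold_locales (simp_all add: D_def char_E_def)
qed

interpretation U: real_rooted_transfer pU qU rU sU c0
proof -
  interpret monotone_transfer pU qU rU sU c0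
    by (rule monotone_transfer_U)
  show "real_rooted_transfer pU qU rU sU c0"
    using char_E_nonzero rU_nonzero char_E_real_roots rU_real_roots
    by unfold_locales (simp_all add: D_def char_E_U)
qed

lemma T_D: "T.D = char_E" and U_D: "U.D = char_E"
  by (simp_all add: T.D_def U.D_def char_E_def char_E_U)

lemma eig_mult_E_real:
  assumes root: "poly char_E x = 0"
  shows "eig_mult N f q w (bcE) (of_real x) = order x char_E"
proof -
  have "poly pT x = cos \<gamma> \<and> poly sT x = cos \<gamma>" if "poly rT x = 0"
  proof -
    have "poly sT x = poly pT x" "poly pT x + poly sT x = c0"
      using T.common_root_r_D[of x] that root by (simp_all add: T_D char_E_def)
    then show ?thesis
      by (simp add: c0_def)
  qed
  moreover have "cis \<gamma> = of_real (cos \<gamma>)" if "(cos \<gamma>)\<^sup>2 = 1"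
    using that sin_cos_squared_add[of \<gamma>] by (simp add: complex_eq_iff)
  ultimately have "(poly (cpoly pT) (of_real x) = cis \<gamma> \<and> poly (cpoly sT) (of_real x) = cis \<gamma>
      \<and> poly (cpoly qT) (of_real x) = 0 \<and> poly (cpoly rT) (of_real x) = 0)
      \<longleftrightarrow> (poly rT x = 0 \<and> poly qT x = 0)"
    using T.common_root_r_D[of x] root by (auto simp: T_D complex_eq_iff)
  then show ?thesis
    using eig_mult_E[of "of_real x"] T.order_D[of x] root by (simp add: T_D)
qed

lemma eig_mult_T_real:
  assumes "poly rT x = 0"
  shows "eig_mult N f q w (bcT) (of_real x) = order x rT"
proof -
  have "poly (pderiv rT) x \<noteq> 0"
    using T.p_pderiv_r_neg[OF assms] by auto
  then show ?thesis
    using eig_mult_T[of "of_real x"] order_eq_1_if_simple_root[OF assms] assms by simp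
qed

lemma eig_mult_U_real:
  assumes "poly rU x = 0"
  shows "eig_mult N f q w (bcU) (of_real x) = order x rU"
proof -
  have "poly (pderiv rU) x \<noteq> 0"
    using U.p_pderiv_r_neg[OF assms] by auto
  then show ?thesis
    using eig_mult_U[of "of_real x"] order_eq_1_if_simple_root[OF assms] assms by simp
qed

lemmas eigenvalues_E = eigenvalues_by_char_poly[OF char_E_nonzero is_eig_E eig_mult_E_real char_E_real_roots]
lemmas eigenvalues_T = eigenvalues_by_char_poly[OF rT_nonzero is_eig_T eig_mult_T_real rT_real_roots]
lemmas eigenvalues_U = eigenvalues_by_char_poly[OF rU_nonzero is_eig_U eig_mult_U_real rU_real_roots]

lemma num_eigs_E:
  "cK \<noteq> 0 \<Longrightarrow> num_eigs_eq N f q w bcE N" "cK = 0 \<Longrightarrow> num_eigs_eq N f q w bcE (N - 1)"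
  using eigenvalues_E(1) degree_char_E degree_char_E_cK_zero by auto

lemma num_eigs_T:
  "k11 \<noteq> 0 \<Longrightarrow> num_eigs_eq N f q w bcT N" "k11 = 0 \<Longrightarrow> num_eigs_eq N f q w bcT (N - 1)"
  using eigenvalues_T(1) degree_rT degree_rT_k11_zero by auto

lemma num_eigs_U:
  "cK \<noteq> 0 \<Longrightarrow> num_eigs_eq N f q w bcU (N - 1)" "cK = 0 \<Longrightarrow> num_eigs_eq N f q w bcU (N - 2)"
  using eigenvalues_U(1) degree_rU degree_rU_cK_zero by auto

lemma sgn_lead_coeff_E_T:
  assumes "cK \<noteq> 0" "k11 \<noteq> 0"
  shows "sgn (lead_coeff char_E) = sgn (lead_coeff rT) \<longleftrightarrow> cK * k11 * f 0 > 0"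
proof -
  define X where "X = - weight_prod 1 * w N"
  have "X \<noteq> 0"
    using weight_prod_nonzero[of 1] wN by (simp add: X_def)
  then have "sgn (lead_coeff char_E) = sgn (lead_coeff rT) \<longleftrightarrow> sgn (cK / f 0) = sgn k11"
    using degree_char_E(2)[OF assms(1)] degree_rT(2)[OF assms(2)]
    by (simp add: X_def sgn_mult sgn_eq_0_iff)
  also have "\<dots> \<longleftrightarrow> (cK / f 0) * k11 > 0"
    using assms f0 by (intro sgn_eq_iff_mult_pos) auto
  also have "\<dots> \<longleftrightarrow> cK * k11 * f 0 > 0"
    by (simp add: zero_less_divide_iff zero_less_mult_iff)
  finally show ?thesis .
qed

lemma index_at_top_T: "T.index_at_top = of_bool (cK = 0 \<or> cK * k11 * f 0 > 0)"
proof -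
  have idx: "T.index_at_top = int (degree rT) - int (degree char_E)
      + of_bool (sgn (lead_coeff char_E) = sgn (lead_coeff rT))"
    by (simp add: T.index_at_top_def T_D)
  consider "cK = 0" | "k11 = 0" | "cK \<noteq> 0" "k11 \<noteq> 0"
    by blast
  then show ?thesis
  proof cases
    case 1
    then have "int (degree rT) - int (degree char_E) = 1"
      using degree_rT(1)[OF k11_nonzero_if_cK_zero] degree_char_E_cK_zero N2 by simp
    then show ?thesis
      using T.index_at_top_cases \<open>cK = 0\<close> unfolding idx
      by (cases "sgn (lead_coeff char_E) = sgn (lead_coeff rT)") auto
  next
    case 2
    then have "cK \<noteq> 0"
      using k11_nonzero_if_cK_zero by blast
    with 2 have "int (degree rT) - int (degree char_E) = - 1"
      using degree_rT_k11_zero degree_char_E N2 by simp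
    then show ?thesis
      using T.index_at_top_cases \<open>cK \<noteq> 0\<close> unfolding idx
      by (cases "sgn (lead_coeff char_E) = sgn (lead_coeff rT)") (auto simp: mult_less_0_iff \<open>k11 = 0\<close>)
  next
    case 3
    then have "int (degree rT) - int (degree char_E) = 0"
      using degree_rT degree_char_E by simp
    with 3 show ?thesis
      unfolding idx sgn_lead_coeff_E_T[OF 3(1,2)] by simp
  qed
qed

lemma index_at_top_U: "U.index_at_top = 0"
proof -
  have "int (degree rU) - int (degree char_E) = - 1"
    using degree_rU degree_rU_cK_zero degree_char_E degree_char_E_cK_zero N2 by (cases "cK = 0") simp_all
  then show ?thesis
    using U.index_at_top_cases unfolding U.index_at_top_def U_D
    by (cases "sgn (lead_coeff char_E) = sgn (lead_coeff rU)") auto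
qed

lemma eigv_interlace_T_E:
  assumes "cK = 0 \<or> cK * k11 * f 0 > 0"
  shows "n < degree char_E \<Longrightarrow> eigv N f q w bcT n \<le> eigv N f q w bcE n"
    "n + 1 < degree rT \<Longrightarrow> eigv N f q w bcE n \<le> eigv N f q w bcT (n + 1)"
proof -
  have "int (root_count rT t) - int (root_count char_E t) \<in> {0, 1}" for t
    using T.root_count_interlace[of t] index_at_top_T assms by (simp add: T_D)
  from eigv_interlace_by_root_counts[OF eigenvalues_T(2) eigenvalues_E(2) this]
  show "n < degree char_E \<Longrightarrow> eigv N f q w bcT n \<le> eigv N f q w bcE n"
    "n + 1 < degree rT \<Longrightarrow> eigv N f q w bcE n \<le> eigv N f q w bcT (n + 1)"
    by (simp_all add: eigenvalues_T(3) eigenvalues_E(3))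
qed

lemma eigv_interlace_E_T:
  assumes "\<not> (cK = 0 \<or> cK * k11 * f 0 > 0)"
  shows "n < degree rT \<Longrightarrow> eigv N f q w bcE n \<le> eigv N f q w bcT n"
    "n + 1 < degree char_E \<Longrightarrow> eigv N f q w bcT n \<le> eigv N f q w bcE (n + 1)"
proof -
  have "int (root_count char_E t) - int (root_count rT t) \<in> {0, 1}" for t
    using T.root_count_interlace[of t] index_at_top_T assms by (auto simp: T_D)
  from eigv_interlace_by_root_counts[OF eigenvalues_E(2) eigenvalues_T(2) this]
  show "n < degree rT \<Longrightarrow> eigv N f q w bcE n \<le> eigv N f q w bcT n"
    "n + 1 < degree char_E \<Longrightarrow> eigv N f q w bcT n \<le> eigv N f q w bcE (n + 1)"
    by (simp_all add: eigenvalues_T(3) eigenvalues_E(3))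
qed

lemma eigv_interlace_E_U:
  shows "n < degree rU \<Longrightarrow> eigv N f q w bcE n \<le> eigv N f q w bcU n"
    "n + 1 < degree char_E \<Longrightarrow> eigv N f q w bcU n \<le> eigv N f q w bcE (n + 1)"
proof -
  have "int (root_count char_E t) - int (root_count rU t) \<in> {0, 1}" for t
    using U.root_count_interlace[of t] index_at_top_U by (auto simp: U_D)
  from eigv_interlace_by_root_counts[OF eigenvalues_E(2) eigenvalues_U(2) this]
  show "n < degree rU \<Longrightarrow> eigv N f q w bcE n \<le> eigv N f q w bcU n"
    "n + 1 < degree char_E \<Longrightarrow> eigv N f q w bcU n \<le> eigv N f q w bcE (n + 1)"
    by (simp_all add: eigenvalues_U(3) eigenvalues_E(3))
qed

lemma eigv_interlace_T_cases:
  "cK * k11 * f 0 > 0 \<Longrightarrow> (\<forall>n\<le>N-1. eigv N f q w bcT n \<le> eigv N f q w bcE n)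
     \<and> (\<forall>n\<le>N-2. eigv N f q w bcE n \<le> eigv N f q w bcT (n+1))"
  "cK * k11 * f 0 < 0 \<Longrightarrow> (\<forall>n\<le>N-1. eigv N f q w bcE n \<le> eigv N f q w bcT n)
     \<and> (\<forall>n\<le>N-2. eigv N f q w bcT n \<le> eigv N f q w bcE (n+1))"
  "cK = 0 \<Longrightarrow> \<forall>n\<le>N-2. eigv N f q w bcT n \<le> eigv N f q w bcE n
     \<and> eigv N f q w bcE n \<le> eigv N f q w bcT (n+1)"
  "k11 = 0 \<Longrightarrow> \<forall>n\<le>N-2. eigv N f q w bcE n \<le> eigv N f q w bcT n
     \<and> eigv N f q w bcT n \<le> eigv N f q w bcE (n+1)"
proof -
  assume "cK * k11 * f 0 > 0"
  then have "cK \<noteq> 0" "k11 \<noteq> 0"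
    by auto
  with \<open>cK * k11 * f 0 > 0\<close> show "(\<forall>n\<le>N-1. eigv N f q w bcT n \<le> eigv N f q w bcE n)
     \<and> (\<forall>n\<le>N-2. eigv N f q w bcE n \<le> eigv N f q w bcT (n+1))"
    using eigv_interlace_T_E degree_char_E degree_rT N2 by auto
next
  assume "cK * k11 * f 0 < 0"
  then have "cK \<noteq> 0" "k11 \<noteq> 0" "\<not> (cK = 0 \<or> cK * k11 * f 0 > 0)"
    by auto
  then show "(\<forall>n\<le>N-1. eigv N f q w bcE n \<le> eigv N f q w bcT n)
     \<and> (\<forall>n\<le>N-2. eigv N f q w bcT n \<le> eigv N f q w bcE (n+1))"
    using eigv_interlace_E_T degree_char_E degree_rT N2 by auto
next
  assume "cK = 0"
  then show "\<forall>n\<le>N-2. eigv N f q w bcT n \<le> eigv N f q w bcE n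
     \<and> eigv N f q w bcE n \<le> eigv N f q w bcT (n+1)"
    using eigv_interlace_T_E degree_char_E_cK_zero degree_rT k11_nonzero_if_cK_zero N2 by auto
next
  assume "k11 = 0"
  then have "cK \<noteq> 0" "\<not> (cK = 0 \<or> cK * k11 * f 0 > 0)"
    using k11_nonzero_if_cK_zero by auto
  with \<open>k11 = 0\<close> show "\<forall>n\<le>N-2. eigv N f q w bcE n \<le> eigv N f q w bcT n
     \<and> eigv N f q w bcT n \<le> eigv N f q w bcE (n+1)"
    using eigv_interlace_E_T degree_char_E degree_rT_k11_zero N2 by auto
qed

lemma eigv_interlace_U_cases:
  "cK \<noteq> 0 \<Longrightarrow> \<forall>n\<le>N-2. eigv N f q w bcE n \<le> eigv N f q w bcU n
     \<and> eigv N f q w bcU n \<le> eigv N f q w bcE (n+1)"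
  "cK = 0 \<Longrightarrow> \<forall>n. n + 3 \<le> N \<longrightarrow> eigv N f q w bcE n \<le> eigv N f q w bcU n
     \<and> eigv N f q w bcU n \<le> eigv N f q w bcE (n+1)"
  using eigv_interlace_E_U degree_char_E degree_rU degree_char_E_cK_zero degree_rU_cK_zero N2
  by auto

end

theorem theorem3p6:
  fixes N :: nat and f q w :: "nat \<Rightarrow> real"
    and k11 k12 k21 k22 \<gamma> :: real
  assumes N2: "N \<ge> 2"
    and fnz: "\<forall>n\<le>N. f n \<noteq> 0"
    and wpos: "\<forall>n\<in>{1..N}. w n > 0"
    and SL: "k11 * k22 - k12 * k21 = 1"
    and gam: "-pi < \<gamma>" "\<gamma> \<le> pi"
  defines "E \<equiv> BC_K \<gamma> k11 k12 k21 k22"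
    and "T \<equiv> BC_T k11 k12 k21 k22"
    and "U \<equiv> BC_U k11 k12 k21 k22"
    and "c \<equiv> k11 - f 0 * k12"
  shows
    "(c \<noteq> 0 \<longrightarrow> num_eigs_eq N f q w E N)
   \<and> (c = 0 \<longrightarrow> num_eigs_eq N f q w E (N - 1))
   \<and> (k11 \<noteq> 0 \<longrightarrow> num_eigs_eq N f q w T N)
   \<and> (k11 = 0 \<longrightarrow> num_eigs_eq N f q w T (N - 1))
   \<and> (c \<noteq> 0 \<longrightarrow> num_eigs_eq N f q w U (N - 1))
   \<and> (c = 0 \<longrightarrow> num_eigs_eq N f q w U (N - 2))
   \<and> (c * k11 * f 0 > 0 \<longrightarrow>
        (\<forall>n\<le>N-1. eigv N f q w T n \<le> eigv N f q w E n)
      \<and> (\<forall>n\<le>N-2. eigv N f q w E n \<le> eigv N f q w T (n+1)))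
   \<and> (c * k11 * f 0 < 0 \<longrightarrow>
        (\<forall>n\<le>N-1. eigv N f q w E n \<le> eigv N f q w T n)
      \<and> (\<forall>n\<le>N-2. eigv N f q w T n \<le> eigv N f q w E (n+1)))
   \<and> (c = 0 \<longrightarrow>
        (\<forall>n\<le>N-2. eigv N f q w T n \<le> eigv N f q w E n
                  \<and> eigv N f q w E n \<le> eigv N f q w T (n+1)))
   \<and> (k11 = 0 \<longrightarrow>
        (\<forall>n\<le>N-2. eigv N f q w E n \<le> eigv N f q w T n
                  \<and> eigv N f q w T n \<le> eigv N f q w E (n+1)))
   \<and> (c \<noteq> 0 \<longrightarrow>
        (\<forall>n\<le>N-2. eigv N f q w E n \<le> eigv N f q w U n
                  \<and> eigv N f q w U n \<le> eigv N f q w E (n+1)))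
   \<and> (c = 0 \<longrightarrow>
        (\<forall>n. n + 3 \<le> N \<longrightarrow> eigv N f q w E n \<le> eigv N f q w U n
                  \<and> eigv N f q w U n \<le> eigv N f q w E (n+1)))"
proof -
  interpret sl_problem N f q w k11 k12 k21 k22 \<gamma>
    by unfold_locales (use N2 fnz wpos SL in auto)
  have "c = cK"
    by (simp add: c_def cK_def)
  then show ?thesis
    unfolding E_def T_def U_def
    using num_eigs_E num_eigs_T num_eigs_U eigv_interlace_T_cases eigv_interlace_U_cases
    by simp
qed

end
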